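(* Let $G$ be a finite group. The monoid $(\mathsf{Sym}_{G,0}/\sim)$ of stable equivalence classes of $0$-dimensional locality preserving symmetries is a group, and there is a group isomorphism $\Omega:(\mathsf{Sym}_{G,0}/\sim)\to H^2(G,U(1))$.
   Context: A $0$-dimensional spin system is a single site: $\mathcal A=\mathcal B(\mathcal H)$ for a finite-dimensional Hilbert space $\mathcal H$. A $0$-dimensional locality preserving symmetry (LPS) $(\beta,\mathcal A)$ is a group homomorphism $\beta:G\to\mathrm{Aut}(\mathcal A)$ (equivalently $\beta_g=\mathrm{Ad}(U(g))$ for a projective unitary representation $U$). An on-site symmetry is one with $\beta_g=\mathrm{Ad}(U(g))$ for a linear unitary representation $U$. Two LPSs $(\beta,\mathcal A),(\beta',\mathcal A)$ are equivalent if $\beta'_g=\gamma^{-1}\circ\beta_g\circ\gamma$ for all $g$ for some FDQC $\gamma$ (in $0$ dimensions: an inner automorphism $\mathrm{Ad}(V)$). $(\beta,\mathcal A)$ and $(\beta',\mathcal A')$ are stably equivalent ($\sim$) if there exist on-site symmetries $(\delta,\tilde{\mathcal A}),(\delta',\tilde{\mathcal A}')$ such that $(\beta\otimes\delta,\mathcal A\otimes\tilde{\mathcal A})$ and $(\beta'\otimes\delta',\mathcal A'\otimes\tilde{\mathcal A}')$ are equivalent (in particular $\mathcal A\otimes\tilde{\mathcal A}\cong\mathcal A'\otimes\tilde{\mathcal A}'$). $\mathsf{Sym}_{G,0}$ is the set of $0$-dimensional LPSs, a monoid under stacking $(\beta\otimes\beta',\mathcal A\otimes\mathcal A')$. $H^2(G,U(1))$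 is group cohomology with trivial action. *)

theory Defs
  imports "HOL-Algebra.Coset" "Jordan_Normal_Form.Matrix"
begin

definition adj :: "complex mat \<Rightarrow> complex mat" where
  "adj A = mat (dim_col A) (dim_row A) (\<lambda>(i,j). cnj (A $$ (j,i)))"

definition unitary_mat :: "nat \<Rightarrow> complex mat \<Rightarrow> bool" where
  "unitary_mat n U \<longleftrightarrow> U \<in> carrier_mat n n \<and> U * adj U = 1\<^sub>m n \<and> adj U * U = 1\<^sub>m n"

definition Ad :: "complex mat \<Rightarrow> complex mat \<Rightarrow> complex mat" where
  "Ad U X = U * X * adj U"

definition star_aut :: "nat \<Rightarrow> (complex mat \<Rightarrow> complex mat) \<Rightarrow> bool" where
  "star_aut n f \<longleftrightarrow>
     bij_betw f (carrier_mat n n) (carrier_mat n n) \<and>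
     (\<forall>A\<in>carrier_mat n n. \<forall>B\<in>carrier_mat n n.
        f (A + B) = f A + f B \<and> f (A * B) = f A * f B) \<and>
     (\<forall>c. \<forall>A\<in>carrier_mat n n. f (c \<cdot>\<^sub>m A) = c \<cdot>\<^sub>m f A) \<and>
     (\<forall>A\<in>carrier_mat n n. f (adj A) = adj (f A))"

text \<open>A 0-dimensional LPS is a pair (n, beta): the single site algebra is M_n(C) = B(C^n), n>0,
  and beta is a group homomorphism from G to Aut(M_n(C)) (only its values on carrier G and on
  carrier_mat n n are relevant).\<close>
type_synonym 'g lps = "nat \<times> ('g \<Rightarrow> complex mat \<Rightarrow> complex mat)"

definition is_lps :: "('g, 'b) monoid_scheme \<Rightarrow> 'g lps \<Rightarrow> bool" where
  "is_lps G s \<longleftrightarrow> (case s of (n, \<beta>) \<Rightarrow>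
      0 < n \<and>
      (\<forall>g\<in>carrier G. star_aut n (\<beta> g)) \<and>
      (\<forall>g\<in>carrier G. \<forall>h\<in>carrier G. \<forall>X\<in>carrier_mat n n.
          \<beta> (g \<otimes>\<^bsub>G\<^esub> h) X = \<beta> g (\<beta> h X)) \<and>
      (\<forall>X\<in>carrier_mat n n. \<beta> \<one>\<^bsub>G\<^esub> X = X))"

definition Sym0 :: "('g, 'b) monoid_scheme \<Rightarrow> 'g lps set" where
  "Sym0 G = {s. is_lps G s}"

definition on_site :: "('g, 'b) monoid_scheme \<Rightarrow> 'g lps \<Rightarrow> bool" where
  "on_site G s \<longleftrightarrow> is_lps G s \<and> (case s of (n, \<beta>) \<Rightarrow>
      (\<exists>U. (\<forall>g\<in>carrier G. unitary_mat n (U g)) \<and>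
           (\<forall>g\<in>carrier G. \<forall>h\<in>carrier G. U (g \<otimes>\<^bsub>G\<^esub> h) = U g * U h) \<and>
           U \<one>\<^bsub>G\<^esub> = 1\<^sub>m n \<and>
           (\<forall>g\<in>carrier G. \<forall>X\<in>carrier_mat n n. \<beta> g X = Ad (U g) X)))"

definition munit :: "nat \<Rightarrow> nat \<Rightarrow> nat \<Rightarrow> complex mat" where
  "munit n i j = mat n n (\<lambda>(p,q). if p = i \<and> q = j then 1 else 0)"

text \<open>Tensor product of linear maps on M_n and M_m as a map on M_(n*m) = M_n \<otimes> M_m
  (Kronecker convention: index (i,k) \<mapsto> i*m+k), defined on matrix units and extended linearly:
  (f \<otimes> f')(\<Sum> x_{(i,k),(j,l)} E_ij \<otimes> E_kl) = \<Sum> x_{(i,k),(j,l)} f(E_ij) \<otimes> f'(E_kl).\<close>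
definition tensor_map :: "nat \<Rightarrow> (complex mat \<Rightarrow> complex mat) \<Rightarrow> nat \<Rightarrow> (complex mat \<Rightarrow> complex mat)
    \<Rightarrow> complex mat \<Rightarrow> complex mat" where
  "tensor_map n f m f' X = mat (n*m) (n*m) (\<lambda>(p,q).
     \<Sum>i<n. \<Sum>j<n. \<Sum>k<m. \<Sum>l<m.
       X $$ (i*m+k, j*m+l) * (f (munit n i j)) $$ (p div m, q div m)
                           * (f' (munit m k l)) $$ (p mod m, q mod m))"

definition stack :: "'g lps \<Rightarrow> 'g lps \<Rightarrow> 'g lps" where
  "stack s t = (case s of (n, \<beta>) \<Rightarrow> case t of (m, \<beta>') \<Rightarrow>
      (n*m, \<lambda>g. tensor_map n (\<beta> g) m (\<beta>' g)))"

text \<open>Equivalence on the same algebra: beta'_g = gamma^-1 o beta_g o gamma with gamma = Ad(V)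
  an inner automorphism (a 0-dimensional FDQC).\<close>
definition lps_equiv :: "('g, 'b) monoid_scheme \<Rightarrow> 'g lps \<Rightarrow> 'g lps \<Rightarrow> bool" where
  "lps_equiv G s t \<longleftrightarrow> (case s of (n, \<beta>) \<Rightarrow> case t of (n', \<beta>') \<Rightarrow>
      n = n' \<and> (\<exists>V. unitary_mat n V \<and>
        (\<forall>g\<in>carrier G. \<forall>X\<in>carrier_mat n n. \<beta>' g X = Ad (adj V) (\<beta> g (Ad V X)))))"

definition stably_equiv :: "('g, 'b) monoid_scheme \<Rightarrow> 'g lps \<Rightarrow> 'g lps \<Rightarrow> bool" where
  "stably_equiv G s t \<longleftrightarrow> is_lps G s \<and> is_lps G t \<and>
     (\<exists>d d'. on_site G d \<and> on_site G d' \<and> lps_equiv G (stack s d) (stack t d'))"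

definition stab_rel :: "('g, 'b) monoid_scheme \<Rightarrow> ('g lps \<times> 'g lps) set" where
  "stab_rel G = {(s, t). stably_equiv G s t}"

definition SymQ :: "('g, 'b) monoid_scheme \<Rightarrow> 'g lps set monoid" where
  "SymQ G = \<lparr> partial_object.carrier = Sym0 G // stab_rel G,
             monoid.mult = (\<lambda>X Y. stab_rel G `` {stack (SOME s. s \<in> X) (SOME t. t \<in> Y)}),
             monoid.one = stab_rel G `` {(1, \<lambda>g A. A)} \<rparr>"

text \<open>Normalised to the value 1 outside carrier G \<times> carrier G so that the cochains form a set.\<close>
definition cocycles2 :: "('g, 'b) monoid_scheme \<Rightarrow> ('g \<times> 'g \<Rightarrow> complex) set" where
  "cocycles2 G = {\<omega>.
     (\<forall>g\<in>carrier G. \<forall>h\<in>carrier G. cmod (\<omega> (g,h)) = 1) \<and>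
     (\<forall>x. x \<notin> carrier G \<times> carrier G \<longrightarrow> \<omega> x = 1) \<and>
     (\<forall>g\<in>carrier G. \<forall>h\<in>carrier G. \<forall>k\<in>carrier G.
        \<omega> (g,h) * \<omega> (g \<otimes>\<^bsub>G\<^esub> h, k) = \<omega> (h,k) * \<omega> (g, h \<otimes>\<^bsub>G\<^esub> k))}"

definition coboundaries2 :: "('g, 'b) monoid_scheme \<Rightarrow> ('g \<times> 'g \<Rightarrow> complex) set" where
  "coboundaries2 G = {\<omega>. \<exists>\<mu>. (\<forall>g\<in>carrier G. cmod (\<mu> g) = 1) \<and>
     (\<forall>g\<in>carrier G. \<forall>h\<in>carrier G. \<omega> (g,h) = \<mu> g * \<mu> h / \<mu> (g \<otimes>\<^bsub>G\<^esub> h)) \<and>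
     (\<forall>x. x \<notin> carrier G \<times> carrier G \<longrightarrow> \<omega> x = 1)}"

definition Z2 :: "('g, 'b) monoid_scheme \<Rightarrow> ('g \<times> 'g \<Rightarrow> complex) monoid" where
  "Z2 G = \<lparr> partial_object.carrier = cocycles2 G, monoid.mult = (\<lambda>a b x. a x * b x), monoid.one = (\<lambda>_. 1) \<rparr>"

definition H2 :: "('g, 'b) monoid_scheme \<Rightarrow> ('g \<times> 'g \<Rightarrow> complex) set monoid" where
  "H2 G = Z2 G Mod coboundaries2 G"

end

theory Submission
  imports Defs "Jordan_Normal_Form.Determinant"
begin

text \<open>By the unitary Skolem--Noether theorem every \<open>\<beta>\<^sub>g\<close> is \<open>Ad(U\<^sub>g)\<close> for a unitary
  \<open>U\<^sub>g\<close> that is unique up to a phase, so \<open>U\<^sub>g U\<^sub>h = \<omega>(g, h) U\<^sub>g\<^sub>h\<close> defines a class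
  \<open>\<Omega>(\<beta>) = [\<omega>] \<in> H\<^sup>2(G, U(1))\<close>. Stacking tensors the lifts and multiplies the cocycles, while
  on-site symmetries (cocycle \<open>1\<close>) and conjugation by a unitary do not change the class; hence
  \<open>\<Omega>\<close> is a well-defined monoid homomorphism on \<open>Sym\<^sub>G\<^sub>,\<^sub>0/\<sim>\<close>. It is injective by Fell
  absorption: if \<open>U\<close> has cocycle \<open>\<omega>\<close> and \<open>L\<close> is the left regular representation, then
  \<open>U \<otimes> L\<close> is conjugate to \<open>1 \<otimes> L\<^sub>\<omega>\<close> with \<open>L\<^sub>\<omega>\<close> the \<open>\<omega>\<close>-twisted regular representation,
  so two symmetries with cohomologous cocycles become equivalent after stacking with the
  on-site symmetry \<open>Ad(1 \<otimes> L)\<close>. It is surjective because \<open>Ad(L\<^sub>\<omega>)\<close> has class \<open>[\<omega>]\<close>. A bijective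
  homomorphism onto the group \<open>H\<^sup>2(G, U(1))\<close> forces \<open>Sym\<^sub>G\<^sub>,\<^sub>0/\<sim>\<close> to be a group.\<close>

section \<open>Adjoints, unitary matrices and inner automorphisms\<close>

lemma adj_dim [simp]: "dim_row (adj A) = dim_col A" "dim_col (adj A) = dim_row A"
  by (simp_all add: adj_def)

lemma adj_index [simp]: "i < dim_col A \<Longrightarrow> j < dim_row A \<Longrightarrow> adj A $$ (i, j) = cnj (A $$ (j, i))"
  by (simp add: adj_def)

lemma adj_carrier_mat [simp, intro]: "A \<in> carrier_mat n m \<Longrightarrow> adj A \<in> carrier_mat m n"
  by (intro carrier_matI) auto

lemma index_mult_mat_sum [simp]:
  "i < dim_row A \<Longrightarrow> j < dim_col B \<Longrightarrow> dim_col A = dim_row B \<Longrightarrow>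
    (A * B) $$ (i, j) = (\<Sum>l<dim_row B. A $$ (i, l) * B $$ (l, j))"
  by (auto simp: scalar_prod_def lessThan_atLeast0 intro!: sum.cong)

declare index_mult_mat(1) [simp del]

text \<open>Square instances: with all dimensions tied to one \<open>n\<close>, the simplifier can discharge the
  carrier premises, which it cannot do when an inner dimension is left schematic.\<close>

lemmas mult_carrier_mat_square [simp] = mult_carrier_mat[of _ n n _ n for n]
lemmas assoc_mult_mat_square = assoc_mult_mat[of _ n n _ n _ n for n]
lemmas mult_smult_assoc_mat_square = mult_smult_assoc_mat[of _ n n _ n for n]
lemmas mult_smult_distrib_square = mult_smult_distrib[of _ n n _ n for n]

lemma index_mult_mat_carrier:
  "A \<in> carrier_mat n k \<Longrightarrow> B \<in> carrier_mat k m \<Longrightarrow> i < n \<Longrightarrow> j < m \<Longrightarrow>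
    (A * B) $$ (i, j) = (\<Sum>l<k. A $$ (i, l) * B $$ (l, j))"
  by simp

lemma mult_if_one_zero [simp]:
  "(if P then 1 else 0) * (x :: 'a :: semiring_1) = (if P then x else 0)"
  "x * (if P then 1 else 0) = (if P then x else 0)"
  by simp_all

lemma if_conj_then_zero [simp]: "(if P \<and> Q then x else 0) = (if P then if Q then x else 0 else 0)"
  by simp

lemma smult_smult_mat [simp]: "a \<cdot>\<^sub>m (b \<cdot>\<^sub>m (A :: 'a :: semigroup_mult mat)) = (a * b) \<cdot>\<^sub>m A"
  by (rule eq_matI) (auto simp: mult.assoc)

lemma one_smult_mat [simp]: "1 \<cdot>\<^sub>m (A :: 'a :: monoid_mult mat) = A"
  by (rule eq_matI) auto

lemma adj_mult:
  assumes "A \<in> carrier_mat n k" "B \<in> carrier_mat k m"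
  shows "adj (A * B) = adj B * adj A"
proof (rule eq_matI)
  fix i j assume "i < dim_row (adj B * adj A)" "j < dim_col (adj B * adj A)"
  then have ij: "i < m" "j < n" using assms by auto
  have "adj (A * B) $$ (i, j) = (\<Sum>l<k. cnj (A $$ (j, l)) * cnj (B $$ (l, i)))"
    using assms ij by (simp add: index_mult_mat_carrier[OF assms ij(2,1)])
  also have "\<dots> = (adj B * adj A) $$ (i, j)"
    using assms ij by (simp add: index_mult_mat_carrier[of "adj B" m k] mult.commute)
  finally show "adj (A * B) $$ (i, j) = (adj B * adj A) $$ (i, j)" .
qed (use assms in auto)

lemma adj_adj [simp]: "adj (adj A) = A"
  by (rule eq_matI) auto

lemma adj_one [simp]: "adj (1\<^sub>m n) = 1\<^sub>m n"
  by (rule eq_matI) auto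

lemma adj_smult: "adj (c \<cdot>\<^sub>m A) = cnj c \<cdot>\<^sub>m adj A"
  by (rule eq_matI) auto

lemma unitary_mat_carrier: "unitary_mat n U \<Longrightarrow> U \<in> carrier_mat n n"
  by (simp add: unitary_mat_def)

lemma unitary_mat_mult_adj: "unitary_mat n U \<Longrightarrow> U * adj U = 1\<^sub>m n"
  by (simp add: unitary_mat_def)

lemma unitary_mat_adj_mult: "unitary_mat n U \<Longrightarrow> adj U * U = 1\<^sub>m n"
  by (simp add: unitary_mat_def)

lemma unitary_matI: "U \<in> carrier_mat n n \<Longrightarrow> U * adj U = 1\<^sub>m n \<Longrightarrow> unitary_mat n U"
  unfolding unitary_mat_def using mat_mult_left_right_inverse[of U n "adj U"] by auto

lemma unitary_matI': "U \<in> carrier_mat n n \<Longrightarrow> adj U * U = 1\<^sub>m n \<Longrightarrow> unitary_mat n U"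
  unfolding unitary_mat_def using mat_mult_left_right_inverse[of "adj U" n U] by auto

lemma unitary_mat_adj: "unitary_mat n U \<Longrightarrow> unitary_mat n (adj U)"
  by (auto simp: unitary_mat_def)

lemma unitary_mat_one: "unitary_mat n (1\<^sub>m n)"
  by (simp add: unitary_mat_def)

lemma unitary_mat_cancel:
  assumes "unitary_mat n U" "Y \<in> carrier_mat n n"
  shows "adj U * (U * Y) = Y" "U * (adj U * Y) = Y"
  using assms unitary_mat_carrier[OF assms(1)]
  by (simp_all add: assoc_mult_mat[of _ n n _ n _ n, symmetric] unitary_mat_mult_adj
      unitary_mat_adj_mult)

lemma unitary_mat_mult:
  assumes "unitary_mat n U" "unitary_mat n V"
  shows "unitary_mat n (U * V)"
proof (rule unitary_matI)
  have U: "U \<in> carrier_mat n n" and V: "V \<in> carrier_mat n n"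
    using assms by (simp_all add: unitary_mat_carrier)
  then show "U * V \<in> carrier_mat n n" by simp
  have "U * V * adj (U * V) = U * (V * adj V * adj U)"
    using U V by (simp add: adj_mult[OF U V] assoc_mult_mat_square[where n=n])
  then show "U * V * adj (U * V) = 1\<^sub>m n"
    using assms U by (simp add: unitary_mat_mult_adj)
qed

lemma cmod_eq_1_mult_cnj: "cmod c = 1 \<Longrightarrow> c * cnj c = 1"
  by (metis complex_norm_square mult.commute of_real_1 power_one)

lemma unitary_mat_smult:
  assumes "unitary_mat n U" "cmod c = 1"
  shows "unitary_mat n (c \<cdot>\<^sub>m U)"
proof (rule unitary_matI)
  have U: "U \<in> carrier_mat n n" using assms by (simp add: unitary_mat_carrier)
  then show "c \<cdot>\<^sub>m U \<in> carrier_mat n n" by simp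
  have "c \<cdot>\<^sub>m U * adj (c \<cdot>\<^sub>m U) = (c * cnj c) \<cdot>\<^sub>m (U * adj U)"
    using U by (simp add: adj_smult mult_smult_assoc_mat_square[where n=n] mult_smult_distrib_square[where n=n]
        mult.commute)
  then show "c \<cdot>\<^sub>m U * adj (c \<cdot>\<^sub>m U) = 1\<^sub>m n"
    using assms by (simp add: cmod_eq_1_mult_cnj unitary_mat_mult_adj)
qed

lemma smult_unitary_mat_cancel:
  assumes "unitary_mat n A" "0 < n" "c \<cdot>\<^sub>m A = d \<cdot>\<^sub>m A"
  shows "c = d"
proof -
  have A: "A \<in> carrier_mat n n" using assms by (simp add: unitary_mat_carrier)
  have "c \<cdot>\<^sub>m (A * adj A) = d \<cdot>\<^sub>m (A * adj A)"
    using A assms(3) by (metis adj_carrier_mat mult_smult_assoc_mat)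
  then have "(c \<cdot>\<^sub>m 1\<^sub>m n) $$ (0, 0) = (d \<cdot>\<^sub>m (1\<^sub>m n :: complex mat)) $$ (0, 0)"
    using assms(1) by (simp add: unitary_mat_mult_adj)
  then show ?thesis using assms(2) by simp
qed

lemma Ad_carrier [simp]: "U \<in> carrier_mat n n \<Longrightarrow> X \<in> carrier_mat n n \<Longrightarrow> Ad U X \<in> carrier_mat n n"
  by (simp add: Ad_def)

lemma Ad_one: "X \<in> carrier_mat n n \<Longrightarrow> Ad (1\<^sub>m n) X = X"
  by (simp add: Ad_def)

lemma Ad_Ad:
  assumes "U \<in> carrier_mat n n" "V \<in> carrier_mat n n" "X \<in> carrier_mat n n"
  shows "Ad U (Ad V X) = Ad (U * V) X"
  using assms by (simp add: Ad_def assoc_mult_mat_square[where n=n] adj_mult[of U n n V n])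

lemma Ad_adj_Ad: "unitary_mat n U \<Longrightarrow> X \<in> carrier_mat n n \<Longrightarrow> Ad (adj U) (Ad U X) = X"
  using unitary_mat_carrier[of n U]
  by (simp add: Ad_def assoc_mult_mat_square[where n=n] unitary_mat_cancel unitary_mat_adj_mult)

lemma Ad_mult:
  assumes "unitary_mat n U" "X \<in> carrier_mat n n" "Y \<in> carrier_mat n n"
  shows "Ad U (X * Y) = Ad U X * Ad U Y"
  using assms unitary_mat_carrier[OF assms(1)]
  by (simp add: Ad_def assoc_mult_mat_square[where n=n] unitary_mat_cancel)

lemma Ad_add:
  assumes "U \<in> carrier_mat n n" "A \<in> carrier_mat n n" "B \<in> carrier_mat n n"
  shows "Ad U (A + B) = Ad U A + Ad U B"
  using assms
  by (simp add: Ad_def mult_add_distrib_mat[of U n n] add_mult_distrib_mat[of _ n n _ "adj U" n])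

lemma Ad_smult:
  assumes "U \<in> carrier_mat n n" "X \<in> carrier_mat n n"
  shows "Ad U (c \<cdot>\<^sub>m X) = c \<cdot>\<^sub>m Ad U X"
  using assms
  by (simp add: Ad_def mult_smult_distrib_square[where n=n] mult_smult_assoc_mat_square[where n=n])

lemma Ad_adj:
  assumes "U \<in> carrier_mat n n" "A \<in> carrier_mat n n"
  shows "Ad U (adj A) = adj (Ad U A)"
  using assms by (simp add: Ad_def adj_mult[of _ n n _ n] assoc_mult_mat_square[where n=n])

lemma Ad_smult_unitary:
  assumes "U \<in> carrier_mat n n" "X \<in> carrier_mat n n" "cmod c = 1"
  shows "Ad (c \<cdot>\<^sub>m U) X = Ad U X"
  using assms
  by (simp add: Ad_def adj_smult mult_smult_assoc_mat_square[where n=n]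
      mult_smult_distrib_square[where n=n] cmod_eq_1_mult_cnj mult.commute[of "cnj c"])

lemma star_aut_Ad:
  assumes U: "unitary_mat n U"
  shows "star_aut n (Ad U)"
proof -
  have Uc: "U \<in> carrier_mat n n" using U by (simp add: unitary_mat_carrier)
  have "bij_betw (Ad U) (carrier_mat n n) (carrier_mat n n)"
    by (rule bij_betw_byWitness[where f' = "Ad (adj U)"])
      (use Uc Ad_adj_Ad[OF U] Ad_adj_Ad[OF unitary_mat_adj[OF U]] in auto)
  then show ?thesis
    unfolding star_aut_def using Ad_add[OF Uc] Ad_mult[OF U] Ad_smult[OF Uc] Ad_adj[OF Uc] by auto
qed

lemma star_aut_cong:
  assumes "star_aut n f" "\<And>X. X \<in> carrier_mat n n \<Longrightarrow> f X = f' X"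
  shows "star_aut n f'"
proof -
  have "bij_betw f' (carrier_mat n n) (carrier_mat n n)"
    using assms unfolding star_aut_def by (metis (no_types, lifting) bij_betw_cong)
  then show ?thesis using assms unfolding star_aut_def by simp
qed

lemma munit_carrier [simp]: "munit n i j \<in> carrier_mat n n"
  by (simp add: munit_def)

lemma munit_dim [simp]: "dim_row (munit n i j) = n" "dim_col (munit n i j) = n"
  by (simp_all add: munit_def)

lemma munit_index [simp]:
  "p < n \<Longrightarrow> q < n \<Longrightarrow> munit n i j $$ (p, q) = (if p = i \<and> q = j then 1 else 0)"
  by (simp add: munit_def)

lemma mult_munit_index:
  assumes "X \<in> carrier_mat n n" "p < n" "q < n"
  shows "k < n \<Longrightarrow> (X * munit n k l) $$ (p, q) = (if q = l then X $$ (p, k) else 0)"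
    and "l < n \<Longrightarrow> (munit n k l * X) $$ (p, q) = (if p = k then X $$ (l, q) else 0)"
  using assms by (auto simp: if_distrib[of "\<lambda>x. x * _"] if_distrib[of "\<lambda>x. _ * x"] cong: if_cong)

lemma munit_mult:
  assumes "j < n" "k < n"
  shows "munit n i j * munit n k l = (if j = k then munit n i l else 0\<^sub>m n n)"
  by (rule eq_matI) (use assms in \<open>auto simp: mult_munit_index\<close>)

lemma adj_munit: "adj (munit n i j) = munit n j i"
  by (rule eq_matI) auto

lemma munit_sandwich:
  assumes "X \<in> carrier_mat n n" "i < n" "j < n"
  shows "munit n 0 i * X * munit n j 0 = X $$ (i, j) \<cdot>\<^sub>m munit n 0 0"
  by (rule eq_matI) (use assms in \<open>auto simp: mult_munit_index\<close>)

lemma commutes_munit_imp_scalar: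
  assumes W: "W \<in> carrier_mat n n" and n: "0 < n"
    and comm: "\<And>i j. i < n \<Longrightarrow> j < n \<Longrightarrow> W * munit n i j = munit n i j * W"
  shows "W = W $$ (0, 0) \<cdot>\<^sub>m 1\<^sub>m n"
proof (rule eq_matI)
  fix p q assume "p < dim_row (W $$ (0, 0) \<cdot>\<^sub>m 1\<^sub>m n)" "q < dim_col (W $$ (0, 0) \<cdot>\<^sub>m 1\<^sub>m n)"
  then have pq: "p < n" "q < n" by auto
  have "(W * munit n q 0) $$ (p, 0) = (munit n q 0 * W) $$ (p, 0)" using comm pq n by simp
  then have "W $$ (p, q) = (if p = q then W $$ (0, 0) else 0)"
    using pq n W by (simp add: mult_munit_index split: if_splits)
  then show "W $$ (p, q) = (W $$ (0, 0) \<cdot>\<^sub>m 1\<^sub>m n) $$ (p, q)" using pq by simp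
qed (use W in auto)

lemma central_unitary_mat_eq_phase:
  assumes W: "unitary_mat n W" and n: "0 < n"
    and comm: "\<And>X. X \<in> carrier_mat n n \<Longrightarrow> W * X = X * W"
  shows "\<exists>c. cmod c = 1 \<and> W = c \<cdot>\<^sub>m 1\<^sub>m n"
proof -
  define c where "c = W $$ (0, 0)"
  have W_scalar: "W = c \<cdot>\<^sub>m 1\<^sub>m n"
    unfolding c_def by (intro commutes_munit_imp_scalar unitary_mat_carrier[OF W] n comm) simp
  have "(1\<^sub>m n :: complex mat) $$ (0, 0) = (W * adj W) $$ (0, 0)"
    using W by (simp add: unitary_mat_mult_adj)
  also have "\<dots> = ((c * cnj c) \<cdot>\<^sub>m 1\<^sub>m n) $$ (0, 0)"
    unfolding W_scalar by (simp add: adj_smult mult_smult_assoc_mat_square[where n=n]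
        mult_smult_distrib_square[where n=n] mult.commute)
  finally have "c * cnj c = 1" using n by simp
  then have "cmod c = 1"
    by (metis complex_mod_sqrt_Re_mult_cnj one_complex.simps(1) real_sqrt_one)
  with W_scalar show ?thesis by blast
qed

lemma Ad_eq_imp_phase_multiple:
  assumes A: "unitary_mat n A" and B: "unitary_mat n B" and n: "0 < n"
    and eq: "\<And>X. X \<in> carrier_mat n n \<Longrightarrow> Ad A X = Ad B X"
  shows "\<exists>c. cmod c = 1 \<and> B = c \<cdot>\<^sub>m A"
proof -
  have Ac: "A \<in> carrier_mat n n" and Bc: "B \<in> carrier_mat n n"
    using A B by (simp_all add: unitary_mat_carrier)
  define W where "W = adj A * B"
  have "W * X = X * W" if X: "X \<in> carrier_mat n n" for X
  proof -
    have "W * X = adj A * (B * X * adj B) * B"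
      using B X Ac Bc by (simp add: W_def assoc_mult_mat_square[where n=n] unitary_mat_adj_mult)
    also have "\<dots> = adj A * (A * X * adj A) * B" using eq[OF X] by (simp add: Ad_def)
    also have "\<dots> = X * W"
      using A X Ac Bc by (simp add: W_def assoc_mult_mat_square[where n=n] unitary_mat_cancel)
    finally show ?thesis .
  qed
  moreover have "unitary_mat n W" unfolding W_def by (intro unitary_mat_mult unitary_mat_adj A B)
  ultimately obtain c where c: "cmod c = 1" "W = c \<cdot>\<^sub>m 1\<^sub>m n"
    using central_unitary_mat_eq_phase n by blast
  have "B = A * W"
    using A Ac Bc by (simp add: W_def assoc_mult_mat_square[where n=n, symmetric] unitary_mat_mult_adj)
  also have "\<dots> = c \<cdot>\<^sub>m A" using Ac by (simp add: c(2) mult_smult_distrib_square[where n=n])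
  finally show ?thesis using c(1) by blast
qed

section \<open>Every *-automorphism of \<open>M\<^sub>n(\<complex>)\<close> is inner\<close>

text \<open>Skolem--Noether with unitaries: the minimal projection \<open>P = f(E\<^sub>0\<^sub>0)\<close> has a nonzero
  column \<open>c\<close>, and the vectors \<open>f(E\<^sub>i\<^sub>0) e\<^sub>c\<close>, normalised by \<open>\<surd>P\<^sub>c\<^sub>c\<close>, are the columns of a
  unitary \<open>U\<close> with \<open>f(E\<^sub>i\<^sub>j) U = U E\<^sub>i\<^sub>j\<close>.\<close>

locale star_automorphism =
  fixes n :: nat and f :: "complex mat \<Rightarrow> complex mat"
  assumes star_aut: "star_aut n f" and dim_pos: "0 < n"
begin

lemma carrier [simp]: "A \<in> carrier_mat n n \<Longrightarrow> f A \<in> carrier_mat n n"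
  and inj: "inj_on f (carrier_mat n n)"
  and mult: "A \<in> carrier_mat n n \<Longrightarrow> B \<in> carrier_mat n n \<Longrightarrow> f (A * B) = f A * f B"
  and smult: "A \<in> carrier_mat n n \<Longrightarrow> f (c \<cdot>\<^sub>m A) = c \<cdot>\<^sub>m f A"
  and adj: "A \<in> carrier_mat n n \<Longrightarrow> f (adj A) = adj (f A)"
  using star_aut unfolding star_aut_def bij_betw_def by auto

lemma image_munit_dim [simp]: "dim_row (f (munit n i j)) = n" "dim_col (f (munit n i j)) = n"
  using carrier_matD[OF carrier[OF munit_carrier]] by auto

lemma zero: "f (0\<^sub>m n n) = 0\<^sub>m n n"
proof -
  have "0\<^sub>m n n = 0 \<cdot>\<^sub>m munit n 0 0" by (rule eq_matI) auto
  then have "f (0\<^sub>m n n) = 0 \<cdot>\<^sub>m f (munit n 0 0)" by (simp add: smult)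
  also have "\<dots> = 0\<^sub>m n n" by (rule eq_matI) auto
  finally show ?thesis .
qed

lemma image_munit_mult:
  "i < n \<Longrightarrow> j < n \<Longrightarrow> k < n \<Longrightarrow> l < n \<Longrightarrow>
    f (munit n i j) * f (munit n k l) = (if j = k then f (munit n i l) else 0\<^sub>m n n)"
  by (simp add: mult[symmetric] munit_mult zero)

lemma adj_image_munit: "adj (f (munit n i j)) = f (munit n j i)"
  by (simp add: adj[symmetric] adj_munit)

definition proj :: "complex mat" where "proj = f (munit n 0 0)"

lemma proj_carrier [simp]: "proj \<in> carrier_mat n n"
  by (simp add: proj_def)

lemma proj_dim [simp]: "dim_row proj = n" "dim_col proj = n"
  by (simp_all add: proj_def)

lemma proj_nonzero: "proj \<noteq> 0\<^sub>m n n"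
proof
  assume "proj = 0\<^sub>m n n"
  then have "munit n 0 0 = 0\<^sub>m n n"
    using inj_onD[OF inj _ munit_carrier zero_carrier_mat] zero by (simp add: proj_def)
  then have "munit n 0 0 $$ (0, 0) = 0\<^sub>m n n $$ (0, 0)" by simp
  then show False using dim_pos by simp
qed

text \<open>\<open>proj\<close> is an orthogonal projection, so its diagonal entries are squared column norms.\<close>

lemma proj_diag: "c < n \<Longrightarrow> proj $$ (c, c) = of_real (\<Sum>l<n. (cmod (proj $$ (l, c)))\<^sup>2)"
proof -
  assume c: "c < n"
  have "proj $$ (c, c) = (proj * proj) $$ (c, c)"
    using image_munit_mult[of 0 0 0 0] dim_pos by (simp add: proj_def)
  also have "\<dots> = (\<Sum>l<n. adj proj $$ (c, l) * proj $$ (l, c))"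
    using c adj_image_munit[of 0 0] by (simp add: proj_def)
  also have "\<dots> = (\<Sum>l<n. of_real ((cmod (proj $$ (l, c)))\<^sup>2))"
    using c by (intro sum.cong refl) (simp add: complex_norm_square del: of_real_power)
  finally show ?thesis by simp
qed

definition col :: nat where "col = (SOME c. c < n \<and> 0 < Re (proj $$ (c, c)))"

lemma col: "col < n" "0 < Re (proj $$ (col, col))" "proj $$ (col, col) \<noteq> 0"
proof -
  have "\<exists>r<n. \<exists>c<n. proj $$ (r, c) \<noteq> 0"
  proof (rule ccontr)
    assume "\<not> ?thesis"
    then have "proj = 0\<^sub>m n n" by (intro eq_matI) auto
    with proj_nonzero show False ..
  qed
  then obtain r c where rc: "r < n" "c < n" "proj $$ (r, c) \<noteq> 0" by blast
  have "(cmod (proj $$ (r, c)))\<^sup>2 \<le> (\<Sum>l<n. (cmod (proj $$ (l, c)))\<^sup>2)"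
    by (rule member_le_sum) (use rc in auto)
  moreover have "0 < (cmod (proj $$ (r, c)))\<^sup>2" using rc by simp
  ultimately have "0 < (\<Sum>l<n. (cmod (proj $$ (l, c)))\<^sup>2)" by linarith
  then have "\<exists>c. c < n \<and> 0 < Re (proj $$ (c, c))"
    using rc proj_diag[of c] by (auto simp del: of_real_sum of_real_power)
  then have "col < n \<and> 0 < Re (proj $$ (col, col))"
    unfolding col_def by (rule someI_ex)
  then show "col < n" "0 < Re (proj $$ (col, col))" "proj $$ (col, col) \<noteq> 0" by auto
qed

definition scale :: complex where "scale = of_real (sqrt (Re (proj $$ (col, col))))"

lemma scale_mult_cnj: "scale * cnj scale = proj $$ (col, col)"
proof -
  have "proj $$ (col, col) = of_real (Re (proj $$ (col, col)))"
    using proj_diag[OF col(1)] by simp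
  then show ?thesis
    using col(2) by (simp add: scale_def of_real_mult[symmetric] del: of_real_mult)
qed

definition unitary :: "complex mat" where
  "unitary = mat n n (\<lambda>(p, i). f (munit n i 0) $$ (p, col) / scale)"

lemma unitary_carrier [simp]: "unitary \<in> carrier_mat n n"
  by (simp add: unitary_def)

lemma unitary_dim [simp]: "dim_row unitary = n" "dim_col unitary = n"
  by (simp_all add: unitary_def)

lemma unitary_index: "p < n \<Longrightarrow> i < n \<Longrightarrow> unitary $$ (p, i) = f (munit n i 0) $$ (p, col) / scale"
  by (simp add: unitary_def)

lemma unitary_mat: "unitary_mat n unitary"
proof (rule unitary_matI'[OF unitary_carrier], rule eq_matI)
  fix i j assume "i < dim_row (1\<^sub>m n)" "j < dim_col (1\<^sub>m n)"
  then have ij: "i < n" "j < n" by auto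
  have "(adj unitary * unitary) $$ (i, j) =
      (\<Sum>p<n. cnj (f (munit n i 0) $$ (p, col)) * f (munit n j 0) $$ (p, col)) / (scale * cnj scale)"
    using ij col by (simp add: unitary_index sum_divide_distrib mult.commute)
  also have "\<dots> = (adj (f (munit n i 0)) * f (munit n j 0)) $$ (col, col) / (scale * cnj scale)"
    using col by (auto intro!: sum.cong)
  also have "\<dots> = 1\<^sub>m n $$ (i, j)"
  proof -
    have "(adj (f (munit n i 0)) * f (munit n j 0)) $$ (col, col) = (if i = j then proj $$ (col, col) else 0)"
      using image_munit_mult[of 0 i j 0] ij dim_pos col(1) by (simp add: adj_image_munit proj_def)
    then show ?thesis using ij col(3) by (simp add: scale_mult_cnj)
  qed
  finally show "(adj unitary * unitary) $$ (i, j) = 1\<^sub>m n $$ (i, j)" .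
qed (simp_all)

lemma munit_mult_unitary:
  assumes ij: "i < n" "j < n"
  shows "f (munit n i j) * unitary = unitary * munit n i j"
proof (rule eq_matI)
  fix p k assume "p < dim_row (unitary * munit n i j)" "k < dim_col (unitary * munit n i j)"
  then have pk: "p < n" "k < n" by auto
  have "(f (munit n i j) * unitary) $$ (p, k) = (f (munit n i j) * f (munit n k 0)) $$ (p, col) / scale"
    using pk col by (simp add: unitary_index sum_divide_distrib)
  also have "\<dots> = (if k = j then unitary $$ (p, i) else 0)"
    using image_munit_mult[of i j k 0] ij pk col dim_pos by (simp add: unitary_index)
  also have "\<dots> = (unitary * munit n i j) $$ (p, k)"
    using mult_munit_index(1)[OF unitary_carrier pk ij(1)] by simp
  finally show "(f (munit n i j) * unitary) $$ (p, k) = (unitary * munit n i j) $$ (p, k)" .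
qed (auto simp: unitary_def)

lemma munit_eq_Ad:
  assumes "i < n" "j < n"
  shows "f (munit n i j) = Ad unitary (munit n i j)"
proof -
  have "f (munit n i j) = f (munit n i j) * unitary * adj unitary"
    using unitary_mat by (simp add: assoc_mult_mat_square[where n=n] unitary_mat_mult_adj)
  then show ?thesis by (simp add: munit_mult_unitary[OF assms] Ad_def)
qed

lemma eq_Ad:
  assumes X: "X \<in> carrier_mat n n"
  shows "f X = Ad unitary X"
proof -
  define g where "g Y = Ad (adj unitary) (f Y)" for Y
  have g_mult: "g (A * B) = g A * g B" if "A \<in> carrier_mat n n" "B \<in> carrier_mat n n" for A B
    using that unitary_mat by (simp add: g_def mult Ad_mult[OF unitary_mat_adj])
  have g_munit: "g (munit n i j) = munit n i j" if "i < n" "j < n" for i j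
    using that unitary_mat by (simp add: g_def munit_eq_Ad Ad_adj_Ad)
  have gX: "g X \<in> carrier_mat n n" using X by (simp add: g_def)
  have "g X = X"
  proof (rule eq_matI)
    fix i j assume "i < dim_row X" "j < dim_col X"
    then have ij: "i < n" "j < n" using X by auto
    have "g X $$ (i, j) \<cdot>\<^sub>m munit n 0 0 = munit n 0 i * g X * munit n j 0"
      using munit_sandwich[OF gX ij] ..
    also have "\<dots> = g (munit n 0 i * X * munit n j 0)"
      using X ij dim_pos by (simp add: g_mult g_munit)
    also have "\<dots> = X $$ (i, j) \<cdot>\<^sub>m g (munit n 0 0)"
      using X ij by (simp add: munit_sandwich g_def smult Ad_smult[where n=n])
    also have "\<dots> = X $$ (i, j) \<cdot>\<^sub>m munit n 0 0"
      using dim_pos by (simp add: g_munit)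
    finally have "(g X $$ (i, j) \<cdot>\<^sub>m munit n 0 0) $$ (0, 0) = (X $$ (i, j) \<cdot>\<^sub>m munit n 0 0) $$ (0, 0)"
      by simp
    then show "g X $$ (i, j) = X $$ (i, j)" using dim_pos by simp
  qed (use X gX in auto)
  moreover have "Ad unitary (g X) = f X"
    using Ad_adj_Ad[OF unitary_mat_adj[OF unitary_mat]] X by (simp add: g_def)
  ultimately show ?thesis by simp
qed

end

lemma star_aut_imp_Ad:
  assumes "star_aut n f" "0 < n"
  shows "\<exists>U. unitary_mat n U \<and> (\<forall>X\<in>carrier_mat n n. f X = Ad U X)"
proof -
  interpret star_automorphism n f using assms by unfold_locales
  show ?thesis using unitary_mat eq_Ad by blast
qed

section \<open>Kronecker products and the tensor product of inner automorphisms\<close>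

lemma sum_lessThan_mult:
  "(\<Sum>p<n * m. (f :: nat \<Rightarrow> 'a :: comm_monoid_add) p) = (\<Sum>i<n. \<Sum>k<m. f (i * m + k))"
proof -
  have "(\<Sum>p<n * m. f p) = (\<Sum>i<n. sum f {i * m..<i * m + m})"
    using sum.nat_group[of f m n] by simp
  also have "\<dots> = (\<Sum>i<n. \<Sum>k<m. f (i * m + k))"
  proof (rule sum.cong)
    show "sum f {i * m..<i * m + m} = (\<Sum>k<m. f (i * m + k))" for i
      using sum.shift_bounds_nat_ivl[of f 0 "i * m" m] by (simp add: atLeast0LessThan add.commute)
  qed simp
  finally show ?thesis .
qed

lemma less_mult_imp_mod_less: "p < n * m \<Longrightarrow> p mod m < (m :: nat)"
  by (metis mod_less_divisor mult_0_right neq0_conv not_less_zero)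

lemma mult_add_div [simp]: "k < (m :: nat) \<Longrightarrow> (i * m + k) div m = i"
  and mult_add_mod [simp]: "k < m \<Longrightarrow> (i * m + k) mod m = k"
  by auto

lemma mult_add_less: "i < n \<Longrightarrow> k < (m :: nat) \<Longrightarrow> i * m + k < n * m"
proof -
  assume "i < n" "k < m"
  then have "i * m + k < (i + 1) * m" by simp
  also have "\<dots> \<le> n * m" using \<open>i < n\<close> by (intro mult_right_mono) auto
  finally show ?thesis .
qed

lemma mult_add_eq_iff: "j < N \<Longrightarrow> j' < (N :: nat) \<Longrightarrow> a * N + j = a' * N + j' \<longleftrightarrow> a = a' \<and> j = j'"
  by (metis mult_add_div mult_add_mod)

text \<open>Index convention of \<^const>\<open>tensor_map\<close>: row \<open>(i, k)\<close> of \<open>A \<otimes> B\<close> is row \<open>i * dim_row B + k\<close>.\<close>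

definition kron :: "complex mat \<Rightarrow> complex mat \<Rightarrow> complex mat" where
  "kron A B = mat (dim_row A * dim_row B) (dim_col A * dim_col B)
     (\<lambda>(p, q). A $$ (p div dim_row B, q div dim_col B) * B $$ (p mod dim_row B, q mod dim_col B))"

lemma kron_dim [simp]:
  "dim_row (kron A B) = dim_row A * dim_row B" "dim_col (kron A B) = dim_col A * dim_col B"
  by (simp_all add: kron_def)

lemma kron_carrier [simp]:
  "A \<in> carrier_mat n n' \<Longrightarrow> B \<in> carrier_mat m m' \<Longrightarrow> kron A B \<in> carrier_mat (n * m) (n' * m')"
  by (intro carrier_matI) auto

lemma kron_index:
  "A \<in> carrier_mat n n' \<Longrightarrow> B \<in> carrier_mat m m' \<Longrightarrow> p < n * m \<Longrightarrow> q < n' * m' \<Longrightarrow>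
    kron A B $$ (p, q) = A $$ (p div m, q div m') * B $$ (p mod m, q mod m')"
  by (auto simp: kron_def)

lemma kron_index_mult_add:
  "A \<in> carrier_mat n n' \<Longrightarrow> B \<in> carrier_mat m m' \<Longrightarrow> i < n \<Longrightarrow> k < m \<Longrightarrow> j < n' \<Longrightarrow> l < m' \<Longrightarrow>
    kron A B $$ (i * m + k, j * m' + l) = A $$ (i, j) * B $$ (k, l)"
  by (simp add: kron_index mult_add_less)

lemma kron_mult:
  assumes A: "A \<in> carrier_mat n n" and C: "C \<in> carrier_mat n n"
    and B: "B \<in> carrier_mat m m" and D: "D \<in> carrier_mat m m"
  shows "kron A B * kron C D = kron (A * C) (B * D)"
proof (rule eq_matI)
  fix p q assume "p < dim_row (kron (A * C) (B * D))" "q < dim_col (kron (A * C) (B * D))"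
  then have pq: "p < n * m" "q < n * m" using A B C D by auto
  have "(kron A B * kron C D) $$ (p, q) =
      (\<Sum>i<n. \<Sum>k<m. (A $$ (p div m, i) * C $$ (i, q div m)) * (B $$ (p mod m, k) * D $$ (k, q mod m)))"
    using A B C D pq unfolding index_mult_mat_carrier[OF kron_carrier[OF A B] kron_carrier[OF C D] pq]
    by (subst sum_lessThan_mult, intro sum.cong refl) (simp add: kron_index mult_add_less)
  also have "\<dots> = (\<Sum>i<n. A $$ (p div m, i) * C $$ (i, q div m)) *
      (\<Sum>k<m. B $$ (p mod m, k) * D $$ (k, q mod m))"
    by (simp add: sum_product)
  also have "\<dots> = kron (A * C) (B * D) $$ (p, q)"
    using A B C D pq
    by (simp add: kron_index[of _ n n _ m m] less_mult_imp_div_less less_mult_imp_mod_less)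
  finally show "(kron A B * kron C D) $$ (p, q) = kron (A * C) (B * D) $$ (p, q)" .
qed (use A B C D in auto)

lemma kron_adj: "adj (kron A B) = kron (adj A) (adj B)"
  by (rule eq_matI) (auto simp: kron_def less_mult_imp_div_less less_mult_imp_mod_less)

lemma kron_one: "kron (1\<^sub>m n) (1\<^sub>m m) = 1\<^sub>m (n * m)"
proof (rule eq_matI)
  fix p q assume "p < dim_row (1\<^sub>m (n * m))" "q < dim_col (1\<^sub>m (n * m))"
  then have pq: "p < n * m" "q < n * m" by auto
  have "p div m = q div m \<and> p mod m = q mod m \<longleftrightarrow> p = q"
    by (metis div_mult_mod_eq)
  then show "kron (1\<^sub>m n) (1\<^sub>m m) $$ (p, q) = 1\<^sub>m (n * m) $$ (p, q)"
    using pq by (auto simp: kron_def less_mult_imp_div_less less_mult_imp_mod_less)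
qed auto

lemma kron_smult_left: "kron (a \<cdot>\<^sub>m A) B = a \<cdot>\<^sub>m kron A B"
  by (rule eq_matI) (auto simp: kron_def less_mult_imp_div_less less_mult_imp_mod_less)

lemma kron_smult: "kron (a \<cdot>\<^sub>m A) (b \<cdot>\<^sub>m B) = (a * b) \<cdot>\<^sub>m kron A B"
  by (rule eq_matI) (auto simp: kron_def less_mult_imp_div_less less_mult_imp_mod_less)

lemma kron_unitary_mat:
  assumes "unitary_mat n U" "unitary_mat m V"
  shows "unitary_mat (n * m) (kron U V)"
proof (rule unitary_matI)
  have U: "U \<in> carrier_mat n n" and V: "V \<in> carrier_mat m m"
    using assms by (simp_all add: unitary_mat_carrier)
  then show "kron U V \<in> carrier_mat (n * m) (n * m)" by simp
  have "kron U V * adj (kron U V) = kron (U * adj U) (V * adj V)"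
    using U V by (simp add: kron_adj kron_mult)
  then show "kron U V * adj (kron U V) = 1\<^sub>m (n * m)"
    using assms by (simp add: unitary_mat_mult_adj kron_one)
qed

lemma kron_assoc:
  assumes A: "A \<in> carrier_mat n n" and B: "B \<in> carrier_mat m m" and C: "C \<in> carrier_mat r r"
  shows "kron A (kron B C) = kron (kron A B) C"
proof (rule eq_matI)
  fix p q assume "p < dim_row (kron (kron A B) C)" "q < dim_col (kron (kron A B) C)"
  then have pq: "p < n * m * r" "q < n * m * r" using A B C by auto
  then have r: "0 < r" by (metis mult_0_right not_less_zero neq0_conv)
  have mod_mr: "x mod (m * r) = r * (x div r mod m) + x mod r" for x :: nat
    using mod_mult2_eq[of x r m] by (simp add: mult.commute)
  have "x div (m * r) = x div r div m" "x div r mod m = x mod (m * r) div r"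
    "x mod (m * r) mod r = x mod r" for x :: nat
    using r by (simp_all add: mod_mr div_mult2_eq[of x r m, symmetric] mult.commute)
  then show "kron A (kron B C) $$ (p, q) = kron (kron A B) C $$ (p, q)"
    using A B C pq by (simp add: kron_def less_mult_imp_div_less less_mult_imp_mod_less mult.assoc)
qed (use A B C in auto)

lemma Ad_munit_index:
  assumes U: "U \<in> carrier_mat n n" and "i < n" "j < n" "a < n" "b < n"
  shows "Ad U (munit n i j) $$ (a, b) = U $$ (a, i) * cnj (U $$ (b, j))"
proof -
  have "Ad U (munit n i j) $$ (a, b) = (\<Sum>l<n. (U * munit n i j) $$ (a, l) * adj U $$ (l, b))"
    using assms by (simp add: Ad_def)
  also have "\<dots> = (\<Sum>l<n. (if l = j then U $$ (a, i) else 0) * cnj (U $$ (b, l)))"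
    using assms by (intro sum.cong refl) (simp add: mult_munit_index)
  finally show ?thesis using assms by (simp add: if_distrib[of "\<lambda>x. x * _"] cong: if_cong)
qed

lemma tensor_map_cong:
  assumes "\<And>i j. i < n \<Longrightarrow> j < n \<Longrightarrow> f (munit n i j) = f' (munit n i j)"
    and "\<And>i j. i < m \<Longrightarrow> j < m \<Longrightarrow> g (munit m i j) = g' (munit m i j)"
  shows "tensor_map n f m g X = tensor_map n f' m g' X"
  unfolding tensor_map_def using assms by (intro cong_mat refl sum.cong) auto

lemma tensor_map_Ad:
  assumes A: "A \<in> carrier_mat n n" and B: "B \<in> carrier_mat m m"
    and X: "X \<in> carrier_mat (n * m) (n * m)"
  shows "tensor_map n (Ad A) m (Ad B) X = Ad (kron A B) X"
proof (rule eq_matI)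
  fix p q assume "p < dim_row (Ad (kron A B) X)" "q < dim_col (Ad (kron A B) X)"
  then have pq: "p < n * m" "q < n * m" using A B X by (auto simp: Ad_def)
  note pq_div_mod = less_mult_imp_div_less[OF pq(1)] less_mult_imp_mod_less[OF pq(1)]
    less_mult_imp_div_less[OF pq(2)] less_mult_imp_mod_less[OF pq(2)]
  define a where "a i = A $$ (p div m, i)" for i
  define b where "b k = B $$ (p mod m, k)" for k
  define c where "c j = cnj (A $$ (q div m, j))" for j
  define d where "d l = cnj (B $$ (q mod m, l))" for l
  define x where "x i k j l = X $$ (i * m + k, j * m + l)" for i k j l
  have K: "kron A B \<in> carrier_mat (n * m) (n * m)" using A B by simp
  have "tensor_map n (Ad A) m (Ad B) X $$ (p, q) =
      (\<Sum>i<n. \<Sum>j<n. \<Sum>k<m. \<Sum>l<m. x i k j l * (a i * c j) * (b k * d l))"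
    unfolding tensor_map_def using pq pq_div_mod A B
    by (simp add: Ad_munit_index a_def b_def c_def d_def x_def)
  also have "\<dots> = (\<Sum>j<n. \<Sum>l<m. \<Sum>i<n. \<Sum>k<m. a i * b k * x i k j l * (c j * d l))"
  proof -
    have "(\<Sum>i<n. \<Sum>j<n. \<Sum>k<m. \<Sum>l<m. x i k j l * (a i * c j) * (b k * d l))
        = (\<Sum>i<n. \<Sum>j<n. \<Sum>l<m. \<Sum>k<m. a i * b k * x i k j l * (c j * d l))"
      by (rule sum.cong[OF refl], rule sum.cong[OF refl], subst sum.swap, simp add: ac_simps)
    also have "\<dots> = (\<Sum>j<n. \<Sum>i<n. \<Sum>l<m. \<Sum>k<m. a i * b k * x i k j l * (c j * d l))"
      by (rule sum.swap)
    also have "\<dots> = (\<Sum>j<n. \<Sum>l<m. \<Sum>i<n. \<Sum>k<m. a i * b k * x i k j l * (c j * d l))"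
      by (rule sum.cong[OF refl], rule sum.swap)
    finally show ?thesis .
  qed
  also have "\<dots> = (\<Sum>s<n * m. (\<Sum>r<n * m. kron A B $$ (p, r) * X $$ (r, s)) * cnj (kron A B $$ (q, s)))"
    unfolding sum_lessThan_mult sum_distrib_right using pq A B
    by (intro sum.cong refl) (simp add: kron_index mult_add_less a_def b_def c_def d_def x_def)
  also have "\<dots> = Ad (kron A B) X $$ (p, q)"
    using pq K X carrier_matD[OF A] carrier_matD[OF B]
    by (simp add: Ad_def index_mult_mat_carrier[OF mult_carrier_mat[OF K X] adj_carrier_mat[OF K]]
        index_mult_mat_carrier[OF K X] del: index_mult_mat_sum)
  finally show "tensor_map n (Ad A) m (Ad B) X $$ (p, q) = Ad (kron A B) X $$ (p, q)" .
qed (use A B X in \<open>auto simp: Ad_def tensor_map_def\<close>)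

section \<open>The group \<open>H\<^sup>2(G, U(1))\<close>\<close>

lemma Z2_simps [simp]:
  "carrier (Z2 G) = cocycles2 G" "x \<otimes>\<^bsub>Z2 G\<^esub> y = (\<lambda>z. x z * y z)" "\<one>\<^bsub>Z2 G\<^esub> = (\<lambda>_. 1)"
  by (simp_all add: Z2_def)

lemma H2_simps:
  "carrier (H2 G) = rcosets\<^bsub>Z2 G\<^esub> (coboundaries2 G)"
  "X \<otimes>\<^bsub>H2 G\<^esub> Y = X <#>\<^bsub>Z2 G\<^esub> Y" "\<one>\<^bsub>H2 G\<^esub> = coboundaries2 G"
  by (simp_all add: H2_def FactGroup_def)

lemma cocycles2D:
  assumes "a \<in> cocycles2 G"
  shows "\<And>g h. g \<in> carrier G \<Longrightarrow> h \<in> carrier G \<Longrightarrow> cmod (a (g, h)) = 1"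
    and "\<And>x. x \<notin> carrier G \<times> carrier G \<Longrightarrow> a x = 1"
    and "\<And>g h k. g \<in> carrier G \<Longrightarrow> h \<in> carrier G \<Longrightarrow> k \<in> carrier G \<Longrightarrow>
          a (g, h) * a (g \<otimes>\<^bsub>G\<^esub> h, k) = a (h, k) * a (g, h \<otimes>\<^bsub>G\<^esub> k)"
  using assms unfolding cocycles2_def by auto

lemma cocycles2_nonzero: "a \<in> cocycles2 G \<Longrightarrow> a x \<noteq> 0"
  by (cases x) (metis cocycles2D(1,2) mem_Sigma_iff norm_zero one_neq_zero zero_neq_one)

lemma cocycles2_one: "(\<lambda>_. 1) \<in> cocycles2 G"
  unfolding cocycles2_def by auto

lemma cocycles2_mult:
  assumes "a \<in> cocycles2 G" "b \<in> cocycles2 G"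
  shows "(\<lambda>x. a x * b x) \<in> cocycles2 G"
proof -
  note A = cocycles2D[OF assms(1)] and B = cocycles2D[OF assms(2)]
  have "a (g, h) * b (g, h) * (a (g \<otimes>\<^bsub>G\<^esub> h, k) * b (g \<otimes>\<^bsub>G\<^esub> h, k)) =
      a (h, k) * b (h, k) * (a (g, h \<otimes>\<^bsub>G\<^esub> k) * b (g, h \<otimes>\<^bsub>G\<^esub> k))"
    if "g \<in> carrier G" "h \<in> carrier G" "k \<in> carrier G" for g h k
  proof -
    have "a (g, h) * b (g, h) * (a (g \<otimes>\<^bsub>G\<^esub> h, k) * b (g \<otimes>\<^bsub>G\<^esub> h, k)) =
        (a (g, h) * a (g \<otimes>\<^bsub>G\<^esub> h, k)) * (b (g, h) * b (g \<otimes>\<^bsub>G\<^esub> h, k))"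
      by (simp add: ac_simps)
    also have "\<dots> = (a (h, k) * a (g, h \<otimes>\<^bsub>G\<^esub> k)) * (b (h, k) * b (g, h \<otimes>\<^bsub>G\<^esub> k))"
      using A(3)[OF that] B(3)[OF that] by simp
    finally show ?thesis by (simp add: ac_simps)
  qed
  then show ?thesis using A B unfolding cocycles2_def by (auto simp: norm_mult)
qed

lemma cocycles2_inverse:
  assumes "a \<in> cocycles2 G"
  shows "(\<lambda>x. inverse (a x)) \<in> cocycles2 G"
proof -
  note A = cocycles2D[OF assms]
  have "inverse (a (g, h)) * inverse (a (g \<otimes>\<^bsub>G\<^esub> h, k)) =
      inverse (a (h, k)) * inverse (a (g, h \<otimes>\<^bsub>G\<^esub> k))"
    if "g \<in> carrier G" "h \<in> carrier G" "k \<in> carrier G" for g h k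
    using A(3)[OF that] by (metis inverse_mult_distrib)
  then show ?thesis using A unfolding cocycles2_def by (auto simp: norm_inverse)
qed

lemma Z2_comm_group: "comm_group (Z2 G)"
proof (rule comm_groupI)
  fix x assume x: "x \<in> carrier (Z2 G)"
  then have "(\<lambda>z. inverse (x z)) \<otimes>\<^bsub>Z2 G\<^esub> x = \<one>\<^bsub>Z2 G\<^esub>"
    by (simp add: cocycles2_nonzero)
  then show "\<exists>y\<in>carrier (Z2 G). y \<otimes>\<^bsub>Z2 G\<^esub> x = \<one>\<^bsub>Z2 G\<^esub>"
    using cocycles2_inverse x by fastforce
qed (auto simp: cocycles2_mult cocycles2_one ac_simps)

lemma Z2_inv: "a \<in> cocycles2 G \<Longrightarrow> inv\<^bsub>Z2 G\<^esub> a = (\<lambda>z. inverse (a z))"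
  by (intro group.inv_equality[OF comm_group.axioms(2)[OF Z2_comm_group]])
    (simp_all add: cocycles2_inverse cocycles2_nonzero)

lemma coboundaries2E:
  assumes "b \<in> coboundaries2 G"
  obtains \<mu> where "\<And>g. g \<in> carrier G \<Longrightarrow> cmod (\<mu> g) = 1"
    "\<And>g h. g \<in> carrier G \<Longrightarrow> h \<in> carrier G \<Longrightarrow> b (g, h) = \<mu> g * \<mu> h / \<mu> (g \<otimes>\<^bsub>G\<^esub> h)"
    "\<And>x. x \<notin> carrier G \<times> carrier G \<Longrightarrow> b x = 1"
  using assms unfolding coboundaries2_def by blast

lemma one_in_coboundaries2: "(\<lambda>_. 1) \<in> coboundaries2 G"
  unfolding coboundaries2_def by (intro CollectI exI[of _ "\<lambda>_. 1"]) auto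

lemma coboundaries2_subset_cocycles2:
  assumes "group G"
  shows "coboundaries2 G \<subseteq> cocycles2 G"
proof
  interpret group G by (rule assms)
  fix b assume "b \<in> coboundaries2 G"
  then obtain \<mu> where \<mu>: "\<And>g. g \<in> carrier G \<Longrightarrow> cmod (\<mu> g) = 1"
    and b: "\<And>g h. g \<in> carrier G \<Longrightarrow> h \<in> carrier G \<Longrightarrow> b (g, h) = \<mu> g * \<mu> h / \<mu> (g \<otimes>\<^bsub>G\<^esub> h)"
    and b_out: "\<And>x. x \<notin> carrier G \<times> carrier G \<Longrightarrow> b x = 1"
    by (metis coboundaries2E)
  have "\<mu> g \<noteq> 0" if "g \<in> carrier G" for g using \<mu>[OF that] by auto
  then show "b \<in> cocycles2 G"
    unfolding cocycles2_def using \<mu> b_out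
    by (auto simp: b m_assoc norm_mult norm_divide field_simps)
qed

lemma coboundaries2_subgroup:
  assumes "group G"
  shows "subgroup (coboundaries2 G) (Z2 G)"
proof (rule group.subgroupI[OF comm_group.axioms(2)[OF Z2_comm_group]])
  show "coboundaries2 G \<subseteq> carrier (Z2 G)" using coboundaries2_subset_cocycles2[OF assms] by simp
  show "coboundaries2 G \<noteq> {}" using one_in_coboundaries2 by blast
next
  fix a assume a: "a \<in> coboundaries2 G"
  then obtain \<mu> where "\<And>g. g \<in> carrier G \<Longrightarrow> cmod (\<mu> g) = 1"
    "\<And>g h. g \<in> carrier G \<Longrightarrow> h \<in> carrier G \<Longrightarrow> a (g, h) = \<mu> g * \<mu> h / \<mu> (g \<otimes>\<^bsub>G\<^esub> h)"
    "\<And>x. x \<notin> carrier G \<times> carrier G \<Longrightarrow> a x = 1"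
    by (metis coboundaries2E)
  then have "(\<lambda>z. inverse (a z)) \<in> coboundaries2 G"
    unfolding coboundaries2_def
    by (intro CollectI exI[of _ "\<lambda>g. inverse (\<mu> g)"]) (auto simp: norm_inverse norm_divide field_simps)
  then show "inv\<^bsub>Z2 G\<^esub> a \<in> coboundaries2 G"
    using a coboundaries2_subset_cocycles2[OF assms] by (auto simp: Z2_inv)
next
  fix a b assume a: "a \<in> coboundaries2 G" and b: "b \<in> coboundaries2 G"
  obtain \<mu> where "\<And>g. g \<in> carrier G \<Longrightarrow> cmod (\<mu> g) = 1"
    "\<And>g h. g \<in> carrier G \<Longrightarrow> h \<in> carrier G \<Longrightarrow> a (g, h) = \<mu> g * \<mu> h / \<mu> (g \<otimes>\<^bsub>G\<^esub> h)"
    "\<And>x. x \<notin> carrier G \<times> carrier G \<Longrightarrow> a x = 1"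
    using a by (metis coboundaries2E)
  moreover obtain \<nu> where "\<And>g. g \<in> carrier G \<Longrightarrow> cmod (\<nu> g) = 1"
    "\<And>g h. g \<in> carrier G \<Longrightarrow> h \<in> carrier G \<Longrightarrow> b (g, h) = \<nu> g * \<nu> h / \<nu> (g \<otimes>\<^bsub>G\<^esub> h)"
    "\<And>x. x \<notin> carrier G \<times> carrier G \<Longrightarrow> b x = 1"
    using b by (metis coboundaries2E)
  ultimately show "a \<otimes>\<^bsub>Z2 G\<^esub> b \<in> coboundaries2 G"
    unfolding coboundaries2_def Z2_simps
    by (intro CollectI exI[of _ "\<lambda>g. \<mu> g * \<nu> g"]) (auto simp: norm_mult)
qed

lemma coboundaries2_normal: "group G \<Longrightarrow> coboundaries2 G \<lhd> Z2 G"
  using comm_group.subgroup_imp_normal[OF Z2_comm_group coboundaries2_subgroup] by blast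

lemma H2_group: "group G \<Longrightarrow> group (H2 G)"
  unfolding H2_def by (rule normal.factorgroup_is_group[OF coboundaries2_normal])

lemma coboundaries2_rcos_eq:
  assumes G: "group G" and w: "\<omega> \<in> cocycles2 G" and b: "b \<in> coboundaries2 G"
  shows "coboundaries2 G #>\<^bsub>Z2 G\<^esub> (\<lambda>x. b x * \<omega> x) = coboundaries2 G #>\<^bsub>Z2 G\<^esub> \<omega>"
proof -
  have "(\<lambda>x. b x * \<omega> x) \<in> coboundaries2 G #>\<^bsub>Z2 G\<^esub> \<omega>"
    unfolding r_coset_def using b by auto
  then show ?thesis
    using group.repr_independence[OF comm_group.axioms(2)[OF Z2_comm_group]
        _ _ coboundaries2_subgroup[OF G]] w
    by (metis Z2_simps(1))
qed

lemma coboundaries2_rcos_eqD: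
  assumes G: "group G" and w: "\<omega> \<in> cocycles2 G"
    and eq: "coboundaries2 G #>\<^bsub>Z2 G\<^esub> \<omega> = coboundaries2 G #>\<^bsub>Z2 G\<^esub> \<omega>'"
  shows "\<exists>b\<in>coboundaries2 G. \<omega> = (\<lambda>x. b x * \<omega>' x)"
proof -
  have "\<omega> \<in> coboundaries2 G #>\<^bsub>Z2 G\<^esub> \<omega>'"
    using group.repr_independenceD[OF comm_group.axioms(2)[OF Z2_comm_group]
        coboundaries2_subgroup[OF G], of \<omega> \<omega>'] w eq by simp
  then show ?thesis unfolding r_coset_def by auto
qed

section \<open>Projective implementations and the cohomology class of a symmetry\<close>

definition proj_impl :: "('g, 'b) monoid_scheme \<Rightarrow> nat \<Rightarrow> ('g \<Rightarrow> complex mat \<Rightarrow> complex mat)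
    \<Rightarrow> ('g \<Rightarrow> complex mat) \<Rightarrow> ('g \<times> 'g \<Rightarrow> complex) \<Rightarrow> bool" where
  "proj_impl G n \<beta> U \<omega> \<longleftrightarrow>
     (\<forall>g\<in>carrier G. unitary_mat n (U g)) \<and>
     (\<forall>g\<in>carrier G. \<forall>X\<in>carrier_mat n n. \<beta> g X = Ad (U g) X) \<and>
     (\<forall>g\<in>carrier G. \<forall>h\<in>carrier G. U g * U h = \<omega> (g, h) \<cdot>\<^sub>m U (g \<otimes>\<^bsub>G\<^esub> h)) \<and>
     \<omega> \<in> cocycles2 G"

lemma proj_implD:
  assumes "proj_impl G n \<beta> U \<omega>"
  shows "\<And>g. g \<in> carrier G \<Longrightarrow> unitary_mat n (U g)"
    and "\<And>g. g \<in> carrier G \<Longrightarrow> U g \<in> carrier_mat n n"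
    and "\<And>g X. g \<in> carrier G \<Longrightarrow> X \<in> carrier_mat n n \<Longrightarrow> \<beta> g X = Ad (U g) X"
    and "\<And>g h. g \<in> carrier G \<Longrightarrow> h \<in> carrier G \<Longrightarrow> U g * U h = \<omega> (g, h) \<cdot>\<^sub>m U (g \<otimes>\<^bsub>G\<^esub> h)"
    and "\<omega> \<in> cocycles2 G"
  using assms unitary_mat_carrier unfolding proj_impl_def by auto

text \<open>The cocycle identity is associativity of \<open>U g * U h * U k\<close>.\<close>

lemma projective_rep_cocycle:
  fixes G (structure)
  assumes G: "group G" and n: "0 < n"
    and U: "\<And>g. g \<in> carrier G \<Longrightarrow> unitary_mat n (U g)"
    and U_mult: "\<And>g h. g \<in> carrier G \<Longrightarrow> h \<in> carrier G \<Longrightarrow> U g * U h = \<omega> (g, h) \<cdot>\<^sub>m U (g \<otimes>\<^bsub>G\<^esub> h)"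
    and \<omega>_mod: "\<And>g h. g \<in> carrier G \<Longrightarrow> h \<in> carrier G \<Longrightarrow> cmod (\<omega> (g, h)) = 1"
    and \<omega>_out: "\<And>x. x \<notin> carrier G \<times> carrier G \<Longrightarrow> \<omega> x = 1"
  shows "\<omega> \<in> cocycles2 G"
proof -
  interpret group G by (rule G)
  have Uc: "U g \<in> carrier_mat n n" if "g \<in> carrier G" for g using U[OF that] by (rule unitary_mat_carrier)
  have "\<omega> (g, h) * \<omega> (g \<otimes> h, k) = \<omega> (h, k) * \<omega> (g, h \<otimes> k)"
    if ghk: "g \<in> carrier G" "h \<in> carrier G" "k \<in> carrier G" for g h k
  proof (rule smult_unitary_mat_cancel[OF U n])
    show "g \<otimes> h \<otimes> k \<in> carrier G" using ghk by simp
    have "U g * U h * U k = (\<omega> (g, h) * \<omega> (g \<otimes> h, k)) \<cdot>\<^sub>m U (g \<otimes> h \<otimes> k)"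
      using ghk U_mult Uc by (simp add: mult_smult_assoc_mat_square[where n=n])
    moreover have "U g * (U h * U k) = (\<omega> (h, k) * \<omega> (g, h \<otimes> k)) \<cdot>\<^sub>m U (g \<otimes> (h \<otimes> k))"
      using ghk U_mult Uc by (simp add: mult_smult_distrib_square[where n=n] ac_simps)
    moreover have "U g * U h * U k = U g * (U h * U k)"
      using ghk Uc by (simp add: assoc_mult_mat_square[where n=n])
    ultimately show "(\<omega> (g, h) * \<omega> (g \<otimes> h, k)) \<cdot>\<^sub>m U (g \<otimes> h \<otimes> k) =
        (\<omega> (h, k) * \<omega> (g, h \<otimes> k)) \<cdot>\<^sub>m U (g \<otimes> h \<otimes> k)"
      using ghk by (simp add: m_assoc)
  qed
  then show ?thesis unfolding cocycles2_def using \<omega>_mod \<omega>_out by auto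
qed

lemma lps_proj_impl_exists:
  fixes G (structure)
  assumes G: "group G" and L: "is_lps G (n, \<beta>)"
  shows "\<exists>U \<omega>. proj_impl G n \<beta> U \<omega>"
proof -
  interpret group G by (rule G)
  have n: "0 < n" and aut: "\<And>g. g \<in> carrier G \<Longrightarrow> star_aut n (\<beta> g)"
    and hom: "\<And>g h X. g \<in> carrier G \<Longrightarrow> h \<in> carrier G \<Longrightarrow> X \<in> carrier_mat n n \<Longrightarrow>
        \<beta> (g \<otimes> h) X = \<beta> g (\<beta> h X)"
    using L unfolding is_lps_def by auto
  obtain U where U: "\<And>g. g \<in> carrier G \<Longrightarrow> unitary_mat n (U g)"
    and U_Ad: "\<And>g X. g \<in> carrier G \<Longrightarrow> X \<in> carrier_mat n n \<Longrightarrow> \<beta> g X = Ad (U g) X"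
    using star_aut_imp_Ad[OF aut n] by metis
  have Uc: "U g \<in> carrier_mat n n" if "g \<in> carrier G" for g using U[OF that] by (rule unitary_mat_carrier)
  have phase: "\<exists>c. cmod c = 1 \<and> U g * U h = c \<cdot>\<^sub>m U (g \<otimes> h)"
    if gh: "g \<in> carrier G" "h \<in> carrier G" for g h
  proof (rule Ad_eq_imp_phase_multiple[OF U unitary_mat_mult[OF U U] n])
    fix X :: "complex mat" assume X: "X \<in> carrier_mat n n"
    have "Ad (U (g \<otimes> h)) X = \<beta> g (\<beta> h X)" using U_Ad[of "g \<otimes> h" X] hom[OF gh X] gh X by simp
    also have "\<dots> = Ad (U g * U h) X" using U_Ad gh X Uc by (simp add: Ad_Ad[where n=n])
    finally show "Ad (U (g \<otimes> h)) X = Ad (U g * U h) X" .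
  qed (use gh in auto)
  define \<omega> where "\<omega> x = (if x \<in> carrier G \<times> carrier G then
      SOME c. cmod c = 1 \<and> U (fst x) * U (snd x) = c \<cdot>\<^sub>m U (fst x \<otimes> snd x) else 1)" for x
  have \<omega>: "cmod (\<omega> (g, h)) = 1 \<and> U g * U h = \<omega> (g, h) \<cdot>\<^sub>m U (g \<otimes> h)"
    if "g \<in> carrier G" "h \<in> carrier G" for g h
    using someI_ex[OF phase[OF that]] that by (simp add: \<omega>_def)
  have "\<omega> \<in> cocycles2 G"
    by (rule projective_rep_cocycle[OF G n U]) (use \<omega> in \<open>auto simp: \<omega>_def\<close>)
  then show ?thesis unfolding proj_impl_def using U U_Ad \<omega> by blast
qed

lemma is_lps_if_proj_impl:
  fixes G (structure)
  assumes G: "group G" and n: "0 < n" and I: "proj_impl G n \<beta> U \<omega>"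
  shows "is_lps G (n, \<beta>)"
proof -
  interpret group G by (rule G)
  note U = proj_implD(1)[OF I] and Uc = proj_implD(2)[OF I] and U_Ad = proj_implD(3)[OF I]
    and U_mult = proj_implD(4)[OF I] and \<omega> = cocycles2D[OF proj_implD(5)[OF I]]
  have aut: "star_aut n (\<beta> g)" if "g \<in> carrier G" for g
    using star_aut_cong[OF star_aut_Ad[OF U[OF that]]] U_Ad[OF that] by metis
  have hom: "\<beta> (g \<otimes> h) X = \<beta> g (\<beta> h X)"
    if gh: "g \<in> carrier G" "h \<in> carrier G" and X: "X \<in> carrier_mat n n" for g h X
  proof -
    have "\<beta> g (\<beta> h X) = Ad (U g * U h) X" using gh X Uc U_Ad by (simp add: Ad_Ad[where n=n])
    also have "\<dots> = Ad (U (g \<otimes> h)) X"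
      using U_mult gh Ad_smult_unitary[OF Uc X \<omega>(1)[OF gh]] by simp
    finally show ?thesis using U_Ad gh X by simp
  qed
  have "U \<one> = adj (U \<one>) * (U \<one> * U \<one>)"
    using unitary_mat_cancel(1)[OF U Uc, of \<one> \<one>] by simp
  also have "\<dots> = \<omega> (\<one>, \<one>) \<cdot>\<^sub>m 1\<^sub>m n"
    using U_mult[of \<one> \<one>] U[of \<one>] Uc[of \<one>]
    by (simp add: mult_smult_distrib_square[where n=n] unitary_mat_adj_mult)
  finally have "\<beta> \<one> X = X" if X: "X \<in> carrier_mat n n" for X
    using U_Ad[of \<one> X] X Ad_smult_unitary[OF one_carrier_mat X \<omega>(1)[of \<one> \<one>]] Ad_one[OF X] by simp
  then show ?thesis unfolding is_lps_def using n aut hom by auto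
qed

lemma proj_impl_cohomologous:
  fixes G (structure)
  assumes G: "group G" and n: "0 < n"
    and I: "proj_impl G n \<beta> U \<omega>" and I': "proj_impl G n \<beta> U' \<omega>'"
  shows "\<exists>b\<in>coboundaries2 G. \<omega>' = (\<lambda>x. b x * \<omega> x)"
proof -
  interpret group G by (rule G)
  note U = proj_implD(1)[OF I] and Uc = proj_implD(2)[OF I] and U_Ad = proj_implD(3)[OF I]
    and U_mult = proj_implD(4)[OF I] and \<omega> = cocycles2D[OF proj_implD(5)[OF I]]
  note U' = proj_implD(1)[OF I'] and U'_Ad = proj_implD(3)[OF I'] and U'_mult = proj_implD(4)[OF I']
    and \<omega>' = cocycles2D[OF proj_implD(5)[OF I']]
  have "\<exists>c. cmod c = 1 \<and> U' g = c \<cdot>\<^sub>m U g" if g: "g \<in> carrier G" for g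
    using Ad_eq_imp_phase_multiple[OF U[OF g] U'[OF g] n] U_Ad[OF g] U'_Ad[OF g] by metis
  then obtain \<mu> where \<mu>: "\<And>g. g \<in> carrier G \<Longrightarrow> cmod (\<mu> g) = 1"
    and U'_eq: "\<And>g. g \<in> carrier G \<Longrightarrow> U' g = \<mu> g \<cdot>\<^sub>m U g" by metis
  have \<mu>_nonzero: "\<mu> g \<noteq> 0" if "g \<in> carrier G" for g using \<mu>[OF that] by auto
  define b where "b x = (if x \<in> carrier G \<times> carrier G
      then \<mu> (fst x) * \<mu> (snd x) / \<mu> (fst x \<otimes> snd x) else 1)" for x
  have b: "b \<in> coboundaries2 G"
    unfolding coboundaries2_def using \<mu> by (intro CollectI exI[of _ \<mu>]) (auto simp: b_def)
  have "\<omega>' (g, h) = b (g, h) * \<omega> (g, h)" if gh: "g \<in> carrier G" "h \<in> carrier G" for g h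
  proof (rule smult_unitary_mat_cancel[OF U'[of "g \<otimes> h"] n])
    show "g \<otimes> h \<in> carrier G" using gh by simp
    have "\<omega>' (g, h) \<cdot>\<^sub>m U' (g \<otimes> h) = U' g * U' h" using U'_mult gh by simp
    also have "\<dots> = (\<mu> g * \<mu> h * \<omega> (g, h)) \<cdot>\<^sub>m U (g \<otimes> h)"
      using U'_eq gh Uc U_mult
      by (simp add: mult_smult_assoc_mat_square[where n=n] mult_smult_distrib_square[where n=n] ac_simps)
    also have "\<dots> = (b (g, h) * \<omega> (g, h)) \<cdot>\<^sub>m U' (g \<otimes> h)"
      using U'_eq[of "g \<otimes> h"] gh \<mu>_nonzero[of "g \<otimes> h"] by (simp add: b_def)
    finally show "\<omega>' (g, h) \<cdot>\<^sub>m U' (g \<otimes> h) = (b (g, h) * \<omega> (g, h)) \<cdot>\<^sub>m U' (g \<otimes> h)" .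
  qed
  then have "\<omega>' = (\<lambda>x. b x * \<omega> x)"
    using \<omega>(2) \<omega>'(2) by (auto simp: b_def fun_eq_iff)
  with b show ?thesis by blast
qed

lemma proj_impl_rescale:
  fixes G (structure)
  assumes G: "group G" and I: "proj_impl G n \<beta> U \<omega>" and b: "b \<in> coboundaries2 G"
  shows "\<exists>U'. proj_impl G n \<beta> U' (\<lambda>x. b x * \<omega> x)"
proof -
  interpret group G by (rule G)
  note U = proj_implD(1)[OF I] and Uc = proj_implD(2)[OF I] and U_Ad = proj_implD(3)[OF I]
    and U_mult = proj_implD(4)[OF I] and \<omega> = proj_implD(5)[OF I]
  obtain \<mu> where \<mu>: "\<And>g. g \<in> carrier G \<Longrightarrow> cmod (\<mu> g) = 1"
    and b_eq: "\<And>g h. g \<in> carrier G \<Longrightarrow> h \<in> carrier G \<Longrightarrow> b (g, h) = \<mu> g * \<mu> h / \<mu> (g \<otimes> h)"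
    using b by (metis coboundaries2E)
  have \<mu>_nonzero: "\<mu> g \<noteq> 0" if "g \<in> carrier G" for g using \<mu>[OF that] by auto
  define U' where "U' g = \<mu> g \<cdot>\<^sub>m U g" for g
  have "U' g * U' h = (b (g, h) * \<omega> (g, h)) \<cdot>\<^sub>m U' (g \<otimes> h)"
    if gh: "g \<in> carrier G" "h \<in> carrier G" for g h
    using gh Uc U_mult \<mu>_nonzero[of "g \<otimes> h"]
    by (simp add: U'_def b_eq mult_smult_assoc_mat_square[where n=n]
        mult_smult_distrib_square[where n=n] ac_simps)
  moreover have "unitary_mat n (U' g)" if "g \<in> carrier G" for g
    using unitary_mat_smult[OF U[OF that] \<mu>[OF that]] by (simp add: U'_def)
  moreover have "\<beta> g X = Ad (U' g) X" if "g \<in> carrier G" "X \<in> carrier_mat n n" for g X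
    using U_Ad[OF that] Ad_smult_unitary[OF Uc[OF that(1)] that(2) \<mu>[OF that(1)]] by (simp add: U'_def)
  moreover have "(\<lambda>x. b x * \<omega> x) \<in> cocycles2 G"
    using cocycles2_mult[OF _ \<omega>] b coboundaries2_subset_cocycles2[OF G] by blast
  ultimately show ?thesis unfolding proj_impl_def by blast
qed

lemma proj_impl_lps_equiv:
  fixes G (structure)
  assumes G: "group G" and E: "lps_equiv G (n, \<beta>) (n', \<beta>')" and I: "proj_impl G n \<beta> U \<omega>"
  shows "n' = n" and "\<exists>U'. proj_impl G n \<beta>' U' \<omega>"
proof -
  interpret group G by (rule G)
  note U = proj_implD(1)[OF I] and Uc = proj_implD(2)[OF I] and U_Ad = proj_implD(3)[OF I]
    and U_mult = proj_implD(4)[OF I]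
  show "n' = n" using E unfolding lps_equiv_def by simp
  obtain V where V: "unitary_mat n V"
    and \<beta>': "\<And>g X. g \<in> carrier G \<Longrightarrow> X \<in> carrier_mat n n \<Longrightarrow> \<beta>' g X = Ad (adj V) (\<beta> g (Ad V X))"
    using E unfolding lps_equiv_def by auto
  have Vc: "V \<in> carrier_mat n n" using V by (rule unitary_mat_carrier)
  define U' where "U' g = adj V * U g * V" for g
  have "U' g * U' h = \<omega> (g, h) \<cdot>\<^sub>m U' (g \<otimes> h)" if gh: "g \<in> carrier G" "h \<in> carrier G" for g h
  proof -
    have "U' g * U' h = adj V * (U g * U h) * V"
      using gh Uc Vc V by (simp add: U'_def assoc_mult_mat_square[where n=n] unitary_mat_cancel)
    then show ?thesis
      using gh Uc Vc U_mult
      by (simp add: U'_def mult_smult_assoc_mat_square[where n=n] mult_smult_distrib_square[where n=n])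
  qed
  moreover have "unitary_mat n (U' g)" if "g \<in> carrier G" for g
    unfolding U'_def by (intro unitary_mat_mult unitary_mat_adj V U that)
  moreover have "\<beta>' g X = Ad (U' g) X" if g: "g \<in> carrier G" and X: "X \<in> carrier_mat n n" for g X
    using \<beta>'[OF g X] U_Ad[OF g] X Vc Uc[OF g]
    by (simp add: U'_def Ad_Ad[where n=n] assoc_mult_mat_square[where n=n])
  ultimately show "\<exists>U'. proj_impl G n \<beta>' U' \<omega>"
    unfolding proj_impl_def using proj_implD(5)[OF I] by blast
qed

lemma lps_equiv_if_conj_same:
  assumes V: "unitary_mat n V" and V': "unitary_mat n V'"
    and M: "\<And>g. g \<in> carrier G \<Longrightarrow> M g \<in> carrier_mat n n"
    and \<beta>: "\<And>g X. g \<in> carrier G \<Longrightarrow> X \<in> carrier_mat n n \<Longrightarrow> \<beta> g X = Ad (adj V * M g * V) X"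
    and \<beta>': "\<And>g X. g \<in> carrier G \<Longrightarrow> X \<in> carrier_mat n n \<Longrightarrow> \<beta>' g X = Ad (adj V' * M g * V') X"
  shows "lps_equiv G (n, \<beta>) (n, \<beta>')"
proof -
  have Vc: "V \<in> carrier_mat n n" and V'c: "V' \<in> carrier_mat n n"
    using V V' by (simp_all add: unitary_mat_carrier)
  define W where "W = adj V * V'"
  have W: "unitary_mat n W" unfolding W_def by (intro unitary_mat_mult unitary_mat_adj V V')
  have "\<beta>' g X = Ad (adj W) (\<beta> g (Ad W X))" if g: "g \<in> carrier G" and X: "X \<in> carrier_mat n n" for g X
  proof -
    have "Ad (adj W) (\<beta> g (Ad W X)) = Ad (adj V' * V * (adj V * M g * V) * (adj V * V')) X"
      using \<beta>[OF g] X Vc V'c M[OF g]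
      by (simp add: W_def Ad_Ad[where n=n] adj_mult[of _ n n _ n] assoc_mult_mat_square[where n=n])
    also have "\<dots> = \<beta>' g X"
      using \<beta>'[OF g X] V Vc V'c M[OF g]
      by (simp add: assoc_mult_mat_square[where n=n] unitary_mat_cancel)
    finally show ?thesis ..
  qed
  then show ?thesis unfolding lps_equiv_def using W by auto
qed

lemma stack_simp: "stack (n, \<beta>) (m, \<beta>') = (n * m, \<lambda>g. tensor_map n (\<beta> g) m (\<beta>' g))"
  by (simp add: stack_def)

lemma proj_impl_stack:
  assumes I: "proj_impl G n \<beta> U \<omega>" and I': "proj_impl G m \<beta>' U' \<omega>'"
  shows "proj_impl G (n * m) (\<lambda>g. tensor_map n (\<beta> g) m (\<beta>' g)) (\<lambda>g. kron (U g) (U' g))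
      (\<lambda>x. \<omega> x * \<omega>' x)"
proof -
  note U = proj_implD(1)[OF I] and Uc = proj_implD(2)[OF I] and U_Ad = proj_implD(3)[OF I]
    and U_mult = proj_implD(4)[OF I] and \<omega> = proj_implD(5)[OF I]
  note U' = proj_implD(1)[OF I'] and Uc' = proj_implD(2)[OF I'] and U'_Ad = proj_implD(3)[OF I']
    and U'_mult = proj_implD(4)[OF I'] and \<omega>' = proj_implD(5)[OF I']
  have "tensor_map n (\<beta> g) m (\<beta>' g) X = Ad (kron (U g) (U' g)) X"
    if g: "g \<in> carrier G" and X: "X \<in> carrier_mat (n * m) (n * m)" for g X
  proof -
    have "tensor_map n (\<beta> g) m (\<beta>' g) X = tensor_map n (Ad (U g)) m (Ad (U' g)) X"
      using U_Ad[OF g] U'_Ad[OF g] by (intro tensor_map_cong) auto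
    also have "\<dots> = Ad (kron (U g) (U' g)) X" using tensor_map_Ad[OF Uc[OF g] Uc'[OF g] X] .
    finally show ?thesis .
  qed
  moreover have "kron (U g) (U' g) * kron (U h) (U' h) =
      (\<omega> (g, h) * \<omega>' (g, h)) \<cdot>\<^sub>m kron (U (g \<otimes>\<^bsub>G\<^esub> h)) (U' (g \<otimes>\<^bsub>G\<^esub> h))"
    if "g \<in> carrier G" "h \<in> carrier G" for g h
    using that by (simp add: kron_mult[OF Uc Uc Uc' Uc'] U_mult U'_mult kron_smult)
  moreover have "unitary_mat (n * m) (kron (U g) (U' g))" if "g \<in> carrier G" for g
    using kron_unitary_mat[OF U[OF that] U'[OF that]] .
  ultimately show ?thesis unfolding proj_impl_def using cocycles2_mult[OF \<omega> \<omega>'] by blast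
qed

lemma on_site_proj_impl:
  assumes "on_site G (n, \<beta>)"
  shows "\<exists>U. proj_impl G n \<beta> U (\<lambda>_. 1)"
proof -
  obtain U where "\<forall>g\<in>carrier G. unitary_mat n (U g)"
    "\<forall>g\<in>carrier G. \<forall>h\<in>carrier G. U (g \<otimes>\<^bsub>G\<^esub> h) = U g * U h"
    "\<forall>g\<in>carrier G. \<forall>X\<in>carrier_mat n n. \<beta> g X = Ad (U g) X"
    using assms unfolding on_site_def by auto
  then show ?thesis by (intro exI[of _ U]) (auto simp: proj_impl_def cocycles2_one)
qed

text \<open>The class \<open>\<Omega>(\<beta>)\<close> of the paper. By \<open>proj_impl_cohomologous\<close> the coset does not depend on
  the implementation picked by \<open>SOME\<close>.\<close>

definition lps_class :: "('g, 'b) monoid_scheme \<Rightarrow> 'g lps \<Rightarrow> ('g \<times> 'g \<Rightarrow> complex) set" where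
  "lps_class G s = coboundaries2 G #>\<^bsub>Z2 G\<^esub> (SOME \<omega>. \<exists>U. proj_impl G (fst s) (snd s) U \<omega>)"

lemma is_lps_dim_pos: "is_lps G (n, \<beta>) \<Longrightarrow> 0 < n"
  by (simp add: is_lps_def)

lemma lps_class_eq:
  assumes G: "group G" and n: "0 < n" and I: "proj_impl G n \<beta> U \<omega>"
  shows "lps_class G (n, \<beta>) = coboundaries2 G #>\<^bsub>Z2 G\<^esub> \<omega>"
proof -
  define \<omega>\<^sub>0 where "\<omega>\<^sub>0 = (SOME \<omega>. \<exists>U. proj_impl G n \<beta> U \<omega>)"
  have "\<exists>U. proj_impl G n \<beta> U \<omega>\<^sub>0"
    unfolding \<omega>\<^sub>0_def using someI_ex[of "\<lambda>\<omega>. \<exists>U. proj_impl G n \<beta> U \<omega>"] I by blast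
  then obtain U\<^sub>0 where I\<^sub>0: "proj_impl G n \<beta> U\<^sub>0 \<omega>\<^sub>0" by blast
  obtain b where "b \<in> coboundaries2 G" "\<omega> = (\<lambda>x. b x * \<omega>\<^sub>0 x)"
    using proj_impl_cohomologous[OF G n I\<^sub>0 I] by blast
  then show ?thesis
    using coboundaries2_rcos_eq[OF G proj_implD(5)[OF I\<^sub>0]] by (simp add: lps_class_def \<omega>\<^sub>0_def)
qed

lemma lps_class_carrier:
  assumes G: "group G" and L: "is_lps G s"
  shows "lps_class G s \<in> carrier (H2 G)"
proof -
  obtain n \<beta> where s: "s = (n, \<beta>)" by (cases s)
  with L have L': "is_lps G (n, \<beta>)" by simp
  obtain U \<omega> where I: "proj_impl G n \<beta> U \<omega>" using lps_proj_impl_exists[OF G L'] by blast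
  have "coboundaries2 G #>\<^bsub>Z2 G\<^esub> \<omega> \<in> rcosets\<^bsub>Z2 G\<^esub> coboundaries2 G"
    using proj_implD(5)[OF I] by (auto simp: RCOSETS_def)
  then show ?thesis
    using lps_class_eq[OF G is_lps_dim_pos[OF L'] I] s by (simp add: H2_simps)
qed

lemma stably_equiv_imp_lps_class_eq:
  assumes G: "group G" and S: "stably_equiv G s t"
  shows "lps_class G s = lps_class G t"
proof -
  obtain n \<beta> n' \<beta>' where s: "s = (n, \<beta>)" and t: "t = (n', \<beta>')" by (cases s, cases t)
  obtain k \<delta> k' \<delta>' where on_site: "on_site G (k, \<delta>)" "on_site G (k', \<delta>')"
    and E: "lps_equiv G (stack (n, \<beta>) (k, \<delta>)) (stack (n', \<beta>') (k', \<delta>'))"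
    and L: "is_lps G (n, \<beta>)" "is_lps G (n', \<beta>')"
    using S s t unfolding stably_equiv_def by (metis surj_pair)
  have pos: "0 < n" "0 < n'" "0 < k" using L on_site by (auto simp: on_site_def is_lps_dim_pos)
  obtain U \<omega> where I: "proj_impl G n \<beta> U \<omega>" using lps_proj_impl_exists[OF G L(1)] by blast
  obtain U' \<omega>' where I': "proj_impl G n' \<beta>' U' \<omega>'" using lps_proj_impl_exists[OF G L(2)] by blast
  obtain D where D: "proj_impl G k \<delta> D (\<lambda>_. 1)" using on_site_proj_impl[OF on_site(1)] by blast
  obtain D' where D': "proj_impl G k' \<delta>' D' (\<lambda>_. 1)" using on_site_proj_impl[OF on_site(2)] by blast
  note E' = E[unfolded stack_simp]
  note S1 = proj_impl_stack[OF I D, simplified]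
  note S2 = proj_impl_stack[OF I' D', simplified]
  obtain U\<^sub>2 where "proj_impl G (n * k) (\<lambda>g. tensor_map n' (\<beta>' g) k' (\<delta>' g)) U\<^sub>2 \<omega>"
    using proj_impl_lps_equiv(2)[OF G E' S1] by blast
  then obtain b where "b \<in> coboundaries2 G" "\<omega>' = (\<lambda>x. b x * \<omega> x)"
    using proj_impl_cohomologous[OF G _ _ S2] proj_impl_lps_equiv(1)[OF G E' S1] pos by auto
  then show ?thesis
    using lps_class_eq[OF G _ I] lps_class_eq[OF G _ I'] coboundaries2_rcos_eq[OF G proj_implD(5)[OF I]]
      pos s t by simp
qed

section \<open>Symmetries with the same class are stably equivalent\<close>

locale enumerated_group = group G for G (structure) +
  fixes N :: nat and e :: "nat \<Rightarrow> 'a"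
  assumes bij: "bij_betw e {..<N} (carrier G)"
begin

lemma enum_closed [simp]: "j < N \<Longrightarrow> e j \<in> carrier G"
  using bij bij_betwE by blast

lemma enum_inj: "j < N \<Longrightarrow> k < N \<Longrightarrow> e j = e k \<longleftrightarrow> j = k"
  using bij unfolding bij_betw_def inj_on_def by auto

lemma size_pos: "0 < N"
  using bij one_closed unfolding bij_betw_def by (metis emptyE gr0I image_empty lessThan_0)

lemma sum_enum_eq:
  assumes "x \<in> carrier G"
  shows "(\<Sum>j<N. if e j = x then F j else (0 :: complex)) = F (inv_into {..<N} e x)"
proof -
  have "x \<in> e ` {..<N}" using assms bij by (simp add: bij_betw_def)
  then have i: "inv_into {..<N} e x < N" "e (inv_into {..<N} e x) = x"
    using inv_into_into[of x e "{..<N}"] by (auto simp: f_inv_into_f)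
  then have "(\<Sum>j<N. if e j = x then F j else 0) = (\<Sum>j<N. if j = inv_into {..<N} e x then F j else 0)"
    by (intro sum.cong refl) (metis enum_inj lessThan_iff)
  then show ?thesis using i by simp
qed

text \<open>\<open>L\<^sub>\<omega>(g) \<delta>\<^sub>k = \<omega>(g, k) \<delta>\<^sub>g\<^sub>k\<close> on \<open>\<ell>\<^sup>2(G)\<close>, with \<open>G\<close> enumerated by \<open>e\<close>.\<close>

definition twisted_regular :: "('a \<times> 'a \<Rightarrow> complex) \<Rightarrow> 'a \<Rightarrow> complex mat" where
  "twisted_regular \<omega> g = mat N N (\<lambda>(j, k). if e j = g \<otimes> e k then \<omega> (g, e k) else 0)"

lemma twisted_regular_carrier [simp]: "twisted_regular \<omega> g \<in> carrier_mat N N"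
  by (simp add: twisted_regular_def)

lemma twisted_regular_dim [simp]:
  "dim_row (twisted_regular \<omega> g) = N" "dim_col (twisted_regular \<omega> g) = N"
  by (simp_all add: twisted_regular_def)

lemma twisted_regular_index:
  "j < N \<Longrightarrow> k < N \<Longrightarrow> twisted_regular \<omega> g $$ (j, k) = (if e j = g \<otimes> e k then \<omega> (g, e k) else 0)"
  by (simp add: twisted_regular_def)

lemma twisted_regular_mult:
  assumes \<omega>: "\<omega> \<in> cocycles2 G" and gh: "g \<in> carrier G" "h \<in> carrier G"
  shows "twisted_regular \<omega> g * twisted_regular \<omega> h = \<omega> (g, h) \<cdot>\<^sub>m twisted_regular \<omega> (g \<otimes> h)"
proof (rule eq_matI)
  fix j k assume "j < dim_row (\<omega> (g, h) \<cdot>\<^sub>m twisted_regular \<omega> (g \<otimes> h))"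
    "k < dim_col (\<omega> (g, h) \<cdot>\<^sub>m twisted_regular \<omega> (g \<otimes> h))"
  then have jk: "j < N" "k < N" by auto
  have hk: "h \<otimes> e k \<in> carrier G" using gh jk by simp
  have "(twisted_regular \<omega> g * twisted_regular \<omega> h) $$ (j, k) = (\<Sum>i<N. if e i = h \<otimes> e k
      then (if e j = g \<otimes> e i then \<omega> (g, e i) else 0) * \<omega> (h, e k) else 0)"
    using jk by (intro trans[OF index_mult_mat_sum] sum.cong) (auto simp: twisted_regular_index)
  also have "\<dots> = (if e j = g \<otimes> (h \<otimes> e k) then \<omega> (g, h \<otimes> e k) else 0) * \<omega> (h, e k)"
    using sum_enum_eq[OF hk] hk bij by (simp add: f_inv_into_f bij_betw_def)
  also have "\<dots> = (\<omega> (g, h) \<cdot>\<^sub>m twisted_regular \<omega> (g \<otimes> h)) $$ (j, k)"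
    using jk gh cocycles2D(3)[OF \<omega> gh enum_closed[OF jk(2)]]
    by (simp add: twisted_regular_index m_assoc mult.commute)
  finally show "(twisted_regular \<omega> g * twisted_regular \<omega> h) $$ (j, k) =
      (\<omega> (g, h) \<cdot>\<^sub>m twisted_regular \<omega> (g \<otimes> h)) $$ (j, k)" .
qed auto

lemma twisted_regular_unitary:
  assumes \<omega>: "\<omega> \<in> cocycles2 G" and g: "g \<in> carrier G"
  shows "unitary_mat N (twisted_regular \<omega> g)"
proof (rule unitary_matI'[OF twisted_regular_carrier], rule eq_matI)
  fix k k' assume "k < dim_row (1\<^sub>m N)" "k' < dim_col (1\<^sub>m N)"
  then have kk: "k < N" "k' < N" by auto
  have gk: "g \<otimes> e k \<in> carrier G" using g kk by simp
  have "(adj (twisted_regular \<omega> g) * twisted_regular \<omega> g) $$ (k, k') = (\<Sum>j<N. if e j = g \<otimes> e k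
      then cnj (\<omega> (g, e k)) * (if e j = g \<otimes> e k' then \<omega> (g, e k') else 0) else 0)"
    using kk by (intro trans[OF index_mult_mat_sum] sum.cong) (auto simp: twisted_regular_index)
  also have "\<dots> = cnj (\<omega> (g, e k)) * (if g \<otimes> e k = g \<otimes> e k' then \<omega> (g, e k') else 0)"
    using sum_enum_eq[OF gk] gk bij by (simp add: f_inv_into_f bij_betw_def)
  also have "\<dots> = 1\<^sub>m N $$ (k, k')"
    using kk g enum_inj cmod_eq_1_mult_cnj[OF cocycles2D(1)[OF \<omega> g enum_closed[OF kk(1)]]]
    by (auto simp: mult.commute)
  finally show "(adj (twisted_regular \<omega> g) * twisted_regular \<omega> g) $$ (k, k') = 1\<^sub>m N $$ (k, k')" .
qed auto

lemma regular_one: "twisted_regular (\<lambda>_. 1) \<one> = 1\<^sub>m N"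
  by (rule eq_matI) (auto simp: twisted_regular_index enum_inj)

lemma on_site_regular:
  assumes "0 < k"
  shows "on_site G (k * N, \<lambda>g. Ad (kron (1\<^sub>m k) (twisted_regular (\<lambda>_. 1) g)))"
proof -
  define R where "R g = kron (1\<^sub>m k) (twisted_regular (\<lambda>_. 1) g)" for g
  have R: "unitary_mat (k * N) (R g)" if "g \<in> carrier G" for g
    unfolding R_def by (intro kron_unitary_mat unitary_mat_one twisted_regular_unitary cocycles2_one that)
  have R_mult: "R g * R h = R (g \<otimes> h)" if "g \<in> carrier G" "h \<in> carrier G" for g h
    unfolding R_def using that
    by (simp add: kron_mult[OF one_carrier_mat one_carrier_mat twisted_regular_carrier
          twisted_regular_carrier] twisted_regular_mult[OF cocycles2_one])
  have "proj_impl G (k * N) (\<lambda>g. Ad (R g)) R (\<lambda>_. 1)"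
    unfolding proj_impl_def using R R_mult cocycles2_one by auto
  then have "is_lps G (k * N, \<lambda>g. Ad (R g))"
    using is_lps_if_proj_impl[OF is_group] assms size_pos by simp
  moreover have "R \<one> = 1\<^sub>m (k * N)" unfolding R_def by (simp add: regular_one kron_one)
  ultimately show ?thesis unfolding on_site_def using R R_mult
    by (auto simp: R_def[symmetric] intro!: exI[of _ R])
qed

lemma eq_mat_blockI:
  assumes A: "A \<in> carrier_mat (m * N) (m * N)" and B: "B \<in> carrier_mat (m * N) (m * N)"
    and eq: "\<And>a j a' j'. a < m \<Longrightarrow> j < N \<Longrightarrow> a' < m \<Longrightarrow> j' < N \<Longrightarrow>
      A $$ (a * N + j, a' * N + j') = B $$ (a * N + j, a' * N + j')"
  shows "A = B"
proof (rule eq_matI)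
  fix p q assume "p < dim_row B" "q < dim_col B"
  then have pq: "p < m * N" "q < m * N" using B by auto
  then have "A $$ (p div N * N + p mod N, q div N * N + q mod N) =
      B $$ (p div N * N + p mod N, q div N * N + q mod N)"
    by (intro eq less_mult_imp_div_less less_mult_imp_mod_less)
  then show "A $$ (p, q) = B $$ (p, q)" by simp
qed (use A B in auto)

lemma index_mult_mat_block:
  assumes "A \<in> carrier_mat (m * N) (m * N)" "B \<in> carrier_mat (m * N) (m * N)"
    and "a < m" "j < N" "a' < m" "j' < N"
  shows "(A * B) $$ (a * N + j, a' * N + j') =
    (\<Sum>b<m. \<Sum>k<N. A $$ (a * N + j, b * N + k) * B $$ (b * N + k, a' * N + j'))"
  using assms by (simp add: mult_add_less sum_lessThan_mult)

text \<open>The block-diagonal unitary \<open>\<Sum>\<^sub>k W(e k)\<^sup>* \<otimes> E\<^sub>k\<^sub>k\<close>.\<close>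

definition fell_intertwiner :: "('a \<Rightarrow> complex mat) \<Rightarrow> nat \<Rightarrow> complex mat" where
  "fell_intertwiner W m = mat (m * N) (m * N) (\<lambda>(p, q).
     if p mod N = q mod N then cnj (W (e (p mod N)) $$ (q div N, p div N)) else 0)"

lemma fell_intertwiner_carrier [simp]: "fell_intertwiner W m \<in> carrier_mat (m * N) (m * N)"
  by (simp add: fell_intertwiner_def)

lemma fell_intertwiner_dim [simp]:
  "dim_row (fell_intertwiner W m) = m * N" "dim_col (fell_intertwiner W m) = m * N"
  by (simp_all add: fell_intertwiner_def)

lemma fell_intertwiner_index:
  "a < m \<Longrightarrow> b < m \<Longrightarrow> j < N \<Longrightarrow> k < N \<Longrightarrow>
    fell_intertwiner W m $$ (a * N + j, b * N + k) = (if j = k then cnj (W (e j) $$ (b, a)) else 0)"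
  by (simp add: fell_intertwiner_def mult_add_less)

lemma fell_intertwiner_unitary:
  assumes W: "\<And>g. g \<in> carrier G \<Longrightarrow> unitary_mat m (W g)"
  shows "unitary_mat (m * N) (fell_intertwiner W m)"
proof (rule unitary_matI[OF fell_intertwiner_carrier], rule eq_mat_blockI)
  fix a j a' j' assume ix: "a < m" "j < N" "a' < m" "j' < N"
  have Wc: "W (e j) \<in> carrier_mat m m" using W[of "e j"] ix by (simp add: unitary_mat_carrier)
  have "(fell_intertwiner W m * adj (fell_intertwiner W m)) $$ (a * N + j, a' * N + j') =
      (\<Sum>b<m. \<Sum>k<N. (if j = k then cnj (W (e j) $$ (b, a)) else 0) *
        cnj (if j' = k then cnj (W (e j') $$ (b, a')) else 0))"
    using ix by (subst index_mult_mat_block) (auto intro!: sum.cong simp: fell_intertwiner_index mult_add_less)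
  also have "\<dots> = (if j = j' then (adj (W (e j)) * W (e j)) $$ (a, a') else 0)"
    using ix Wc by (auto simp: if_distrib[of "\<lambda>x. x * _"] if_distrib[of cnj] cong: if_cong intro!: sum.cong)
  also have "\<dots> = 1\<^sub>m (m * N) $$ (a * N + j, a' * N + j')"
    using ix unitary_mat_adj_mult[OF W[OF enum_closed[OF ix(2)]]] by (auto simp: mult_add_less mult_add_eq_iff)
  finally show "(fell_intertwiner W m * adj (fell_intertwiner W m)) $$ (a * N + j, a' * N + j') =
      1\<^sub>m (m * N) $$ (a * N + j, a' * N + j')" .
qed simp_all

lemma adj_proj_rep_mult:
  assumes W: "\<And>g. g \<in> carrier G \<Longrightarrow> unitary_mat m (W g)"
    and W_mult: "\<And>g h. g \<in> carrier G \<Longrightarrow> h \<in> carrier G \<Longrightarrow> W g * W h = \<omega> (g, h) \<cdot>\<^sub>m W (g \<otimes> h)"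
    and gx: "g \<in> carrier G" "x \<in> carrier G"
  shows "adj (W (g \<otimes> x)) * W g = \<omega> (g, x) \<cdot>\<^sub>m adj (W x)"
proof -
  have Wc: "W g \<in> carrier_mat m m" if "g \<in> carrier G" for g using W[OF that] by (rule unitary_mat_carrier)
  have "adj (W (g \<otimes> x)) * W g = adj (W (g \<otimes> x)) * (W g * W x) * adj (W x)"
    using gx Wc unitary_mat_mult_adj[OF W[OF gx(2)]] right_mult_one_mat[OF Wc[OF gx(1)]]
    by (simp add: assoc_mult_mat_square[where n=m])
  also have "\<dots> = \<omega> (g, x) \<cdot>\<^sub>m (adj (W (g \<otimes> x)) * W (g \<otimes> x)) * adj (W x)"
    using gx Wc W_mult by (simp add: mult_smult_distrib_square[where n=m])
  also have "\<dots> = \<omega> (g, x) \<cdot>\<^sub>m adj (W x)"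
    using gx Wc unitary_mat_adj_mult[OF W[OF m_closed[OF gx]]]
      left_mult_one_mat[OF adj_carrier_mat[OF Wc[OF gx(2)]]]
    by (simp add: mult_smult_assoc_mat_square[where n=m])
  finally show ?thesis .
qed

lemma fell_intertwiner_intertwines:
  assumes W: "\<And>g. g \<in> carrier G \<Longrightarrow> unitary_mat m (W g)"
    and W_mult: "\<And>g h. g \<in> carrier G \<Longrightarrow> h \<in> carrier G \<Longrightarrow> W g * W h = \<omega> (g, h) \<cdot>\<^sub>m W (g \<otimes> h)"
    and g: "g \<in> carrier G"
  shows "fell_intertwiner W m * kron (W g) (twisted_regular (\<lambda>_. 1) g) =
    kron (1\<^sub>m m) (twisted_regular \<omega> g) * fell_intertwiner W m"
proof -
  let ?T = "fell_intertwiner W m" and ?L = "twisted_regular (\<lambda>_. 1) g"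
  have Wc: "W g \<in> carrier_mat m m" if "g \<in> carrier G" for g using W[OF that] by (rule unitary_mat_carrier)
  have K1: "kron (W g) ?L \<in> carrier_mat (m * N) (m * N)" using Wc[OF g] by simp
  have K2: "kron (1\<^sub>m m) (twisted_regular \<omega> g) \<in> carrier_mat (m * N) (m * N)" by simp
  show ?thesis
  proof (rule eq_mat_blockI[OF mult_carrier_mat[OF fell_intertwiner_carrier K1]
        mult_carrier_mat[OF K2 fell_intertwiner_carrier]])
    fix a j a' j' assume ix: "a < m" "j < N" "a' < m" "j' < N"
    have Wj: "W (e j) \<in> carrier_mat m m" using Wc ix by simp
    have "(?T * kron (W g) ?L) $$ (a * N + j, a' * N + j') =
        (\<Sum>b<m. cnj (W (e j) $$ (b, a)) * (W g $$ (b, a') * ?L $$ (j, j')))"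
      using ix Wc[OF g] by (subst index_mult_mat_block[OF fell_intertwiner_carrier K1])
        (auto intro!: sum.cong simp: fell_intertwiner_index kron_index_mult_add
          if_distrib[of "\<lambda>x. x * _"] cong: if_cong)
    also have "\<dots> = (if e j = g \<otimes> e j' then (adj (W (e j)) * W g) $$ (a, a') else 0)"
      using ix Wj Wc[OF g] by (auto simp: twisted_regular_index intro!: sum.cong)
    also have "\<dots> = (if e j = g \<otimes> e j' then \<omega> (g, e j') * adj (W (e j')) $$ (a, a') else 0)"
      using adj_proj_rep_mult[OF W W_mult g enum_closed[OF ix(4)]] ix Wc[of "e j'"] by auto
    also have "\<dots> = (kron (1\<^sub>m m) (twisted_regular \<omega> g) * ?T) $$ (a * N + j, a' * N + j')"
      using ix Wc[of "e j'"]
      by (subst index_mult_mat_block[OF K2 fell_intertwiner_carrier])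
        (auto simp: fell_intertwiner_index kron_index_mult_add[OF one_carrier_mat twisted_regular_carrier]
          twisted_regular_index if_distrib[of "\<lambda>x. _ * x"] if_distrib[of "\<lambda>x. x * _"] cong: if_cong)
    finally show "(?T * kron (W g) ?L) $$ (a * N + j, a' * N + j') =
        (kron (1\<^sub>m m) (twisted_regular \<omega> g) * ?T) $$ (a * N + j, a' * N + j')" .
  qed
qed

lemma kron_regular_eq_conj_twisted:
  assumes W: "\<And>g. g \<in> carrier G \<Longrightarrow> unitary_mat m (W g)"
    and W_mult: "\<And>g h. g \<in> carrier G \<Longrightarrow> h \<in> carrier G \<Longrightarrow> W g * W h = \<omega> (g, h) \<cdot>\<^sub>m W (g \<otimes> h)"
    and g: "g \<in> carrier G"
  shows "kron (W g) (twisted_regular (\<lambda>_. 1) g) =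
    adj (fell_intertwiner W m) * kron (1\<^sub>m m) (twisted_regular \<omega> g) * fell_intertwiner W m"
proof -
  let ?T = "fell_intertwiner W m" and ?K = "kron (W g) (twisted_regular (\<lambda>_. 1) g)"
  have T: "unitary_mat (m * N) ?T" using W by (rule fell_intertwiner_unitary)
  have K: "?K \<in> carrier_mat (m * N) (m * N)" using W[OF g] by (simp add: unitary_mat_carrier)
  have "adj ?T * kron (1\<^sub>m m) (twisted_regular \<omega> g) * ?T = adj ?T * (?T * ?K)"
    using fell_intertwiner_intertwines[OF W W_mult g]
    by (simp add: assoc_mult_mat[of _ "m * N" "m * N" _ "m * N" _ "m * N"])
  also have "\<dots> = ?K" using unitary_mat_cancel(1)[OF T K] .
  finally show ?thesis ..
qed

lemma stack_regular_conj_twisted: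
  assumes I: "proj_impl G n \<beta> U \<omega>"
  shows "\<exists>V. unitary_mat (n * k * N) V \<and> (\<forall>g\<in>carrier G. \<forall>X\<in>carrier_mat (n * k * N) (n * k * N).
      tensor_map n (\<beta> g) (k * N) (Ad (kron (1\<^sub>m k) (twisted_regular (\<lambda>_. 1) g))) X =
      Ad (adj V * kron (1\<^sub>m (n * k)) (twisted_regular \<omega> g) * V) X)"
proof -
  note U = proj_implD(1)[OF I] and Uc = proj_implD(2)[OF I] and U_Ad = proj_implD(3)[OF I]
    and U_mult = proj_implD(4)[OF I]
  define W where "W g = kron (U g) (1\<^sub>m k)" for g
  have W: "unitary_mat (n * k) (W g)" if "g \<in> carrier G" for g
    unfolding W_def by (intro kron_unitary_mat U that unitary_mat_one)
  have W_mult: "W g * W h = \<omega> (g, h) \<cdot>\<^sub>m W (g \<otimes> h)" if "g \<in> carrier G" "h \<in> carrier G" for g h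
    unfolding W_def using that
    by (simp add: kron_mult[OF Uc Uc one_carrier_mat one_carrier_mat] U_mult kron_smult_left)
  have conj: "tensor_map n (\<beta> g) (k * N) (Ad (kron (1\<^sub>m k) (twisted_regular (\<lambda>_. 1) g))) X =
      Ad (adj (fell_intertwiner W (n * k)) * kron (1\<^sub>m (n * k)) (twisted_regular \<omega> g) *
        fell_intertwiner W (n * k)) X"
    if g: "g \<in> carrier G" and X: "X \<in> carrier_mat (n * k * N) (n * k * N)" for g X
  proof -
    have "tensor_map n (\<beta> g) (k * N) (Ad (kron (1\<^sub>m k) (twisted_regular (\<lambda>_. 1) g))) X =
        tensor_map n (Ad (U g)) (k * N) (Ad (kron (1\<^sub>m k) (twisted_regular (\<lambda>_. 1) g))) X"
      using U_Ad[OF g] by (intro tensor_map_cong) auto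
    also have "\<dots> = Ad (kron (U g) (kron (1\<^sub>m k) (twisted_regular (\<lambda>_. 1) g))) X"
      using X by (intro tensor_map_Ad[OF Uc[OF g]]) (simp_all add: mult.assoc)
    also have "kron (U g) (kron (1\<^sub>m k) (twisted_regular (\<lambda>_. 1) g)) =
        kron (W g) (twisted_regular (\<lambda>_. 1) g)"
      unfolding W_def by (rule kron_assoc[OF Uc[OF g] one_carrier_mat twisted_regular_carrier])
    finally show ?thesis by (simp add: kron_regular_eq_conj_twisted[OF W W_mult g])
  qed
  show ?thesis
  proof (intro exI conjI ballI)
    show "unitary_mat (n * k * N) (fell_intertwiner W (n * k))" by (rule fell_intertwiner_unitary[OF W])
  qed (rule conj)
qed

lemma same_cocycle_imp_stably_equiv:
  assumes L: "is_lps G (n, \<beta>)" "is_lps G (n', \<beta>')"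
    and I: "proj_impl G n \<beta> U \<omega>" and I': "proj_impl G n' \<beta>' U' \<omega>"
  shows "stably_equiv G (n, \<beta>) (n', \<beta>')"
proof -
  define R where "R k = (k * N, \<lambda>g. Ad (kron (1\<^sub>m k) (twisted_regular (\<lambda>_. 1) g)))" for k
  have on_site: "on_site G (R n')" "on_site G (R n)"
    unfolding R_def using on_site_regular is_lps_dim_pos[OF L(1)] is_lps_dim_pos[OF L(2)] by simp_all
  obtain V where V: "unitary_mat (n * n' * N) V"
    and \<beta>: "\<forall>g\<in>carrier G. \<forall>X\<in>carrier_mat (n * n' * N) (n * n' * N).
      tensor_map n (\<beta> g) (n' * N) (Ad (kron (1\<^sub>m n') (twisted_regular (\<lambda>_. 1) g))) X =
      Ad (adj V * kron (1\<^sub>m (n * n')) (twisted_regular \<omega> g) * V) X"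
    using stack_regular_conj_twisted[OF I, where k = n'] by (elim exE conjE)
  obtain V' where V': "unitary_mat (n * n' * N) V'"
    and \<beta>': "\<forall>g\<in>carrier G. \<forall>X\<in>carrier_mat (n * n' * N) (n * n' * N).
      tensor_map n' (\<beta>' g) (n * N) (Ad (kron (1\<^sub>m n) (twisted_regular (\<lambda>_. 1) g))) X =
      Ad (adj V' * kron (1\<^sub>m (n * n')) (twisted_regular \<omega> g) * V') X"
    using stack_regular_conj_twisted[OF I', where k = n, unfolded mult.commute[of n' n]]
    by (elim exE conjE)
  have "lps_equiv G
      (n * n' * N, \<lambda>g. tensor_map n (\<beta> g) (n' * N) (Ad (kron (1\<^sub>m n') (twisted_regular (\<lambda>_. 1) g))))
      (n * n' * N, \<lambda>g. tensor_map n' (\<beta>' g) (n * N) (Ad (kron (1\<^sub>m n) (twisted_regular (\<lambda>_. 1) g))))"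
    using \<beta> \<beta>' by (intro lps_equiv_if_conj_same[OF V V']) simp_all
  then have "lps_equiv G (stack (n, \<beta>) (R n')) (stack (n', \<beta>') (R n))"
    by (simp add: R_def stack_simp mult.assoc mult.left_commute[of n'])
  then show ?thesis unfolding stably_equiv_def using L on_site by blast
qed

end

lemma stably_equiv_iff_lps_class_eq:
  assumes G: "group G" and fin: "finite (carrier G)"
  shows "stably_equiv G s t \<longleftrightarrow> is_lps G s \<and> is_lps G t \<and> lps_class G s = lps_class G t"
proof
  assume "stably_equiv G s t"
  then show "is_lps G s \<and> is_lps G t \<and> lps_class G s = lps_class G t"
    using stably_equiv_imp_lps_class_eq[OF G] unfolding stably_equiv_def by blast
next
  assume st: "is_lps G s \<and> is_lps G t \<and> lps_class G s = lps_class G t"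
  obtain n \<beta> n' \<beta>' where s: "s = (n, \<beta>)" and t: "t = (n', \<beta>')" by (cases s, cases t)
  with st have L: "is_lps G (n, \<beta>)" "is_lps G (n', \<beta>')" by simp_all
  obtain e where "bij_betw e {..<card (carrier G)} (carrier G)"
    using ex_bij_betw_nat_finite[OF fin] by (auto simp: atLeast0LessThan)
  with G interpret enumerated_group G "card (carrier G)" e
    by (simp add: enumerated_group_def enumerated_group_axioms_def)
  obtain U \<omega> where I: "proj_impl G n \<beta> U \<omega>" using lps_proj_impl_exists[OF G L(1)] by blast
  obtain U' \<omega>' where I': "proj_impl G n' \<beta>' U' \<omega>'" using lps_proj_impl_exists[OF G L(2)] by blast
  have "coboundaries2 G #>\<^bsub>Z2 G\<^esub> \<omega>' = coboundaries2 G #>\<^bsub>Z2 G\<^esub> \<omega>"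
    using st s t lps_class_eq[OF G is_lps_dim_pos[OF L(1)] I] lps_class_eq[OF G is_lps_dim_pos[OF L(2)] I']
    by simp
  then obtain b where b: "b \<in> coboundaries2 G" and \<omega>': "\<omega>' = (\<lambda>x. b x * \<omega> x)"
    using coboundaries2_rcos_eqD[OF G proj_implD(5)[OF I']] by blast
  obtain U'' where "proj_impl G n \<beta> U'' \<omega>'"
    using proj_impl_rescale[OF G I b] unfolding \<omega>' by (elim exE)
  then show "stably_equiv G s t"
    using same_cocycle_imp_stably_equiv[OF L _ I'] s t by simp
qed

section \<open>The quotient monoid and the class map\<close>

lemma bij_hom_imp_group:
  assumes H: "group H" and bij: "bij_betw f (carrier M) (carrier H)"
    and hom: "\<And>x y. x \<in> carrier M \<Longrightarrow> y \<in> carrier M \<Longrightarrow> f (x \<otimes>\<^bsub>M\<^esub> y) = f x \<otimes>\<^bsub>H\<^esub> f y"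
    and closed: "\<And>x y. x \<in> carrier M \<Longrightarrow> y \<in> carrier M \<Longrightarrow> x \<otimes>\<^bsub>M\<^esub> y \<in> carrier M"
    and one: "\<one>\<^bsub>M\<^esub> \<in> carrier M" and f_one: "f \<one>\<^bsub>M\<^esub> = \<one>\<^bsub>H\<^esub>"
  shows "group M"
proof -
  interpret H: group H by (rule H)
  have inj: "inj_on f (carrier M)" and f_carrier: "\<And>x. x \<in> carrier M \<Longrightarrow> f x \<in> carrier H"
    and surj: "f ` carrier M = carrier H"
    using bij unfolding bij_betw_def by auto
  show ?thesis
  proof (rule groupI)
    fix x y z assume xyz: "x \<in> carrier M" "y \<in> carrier M" "z \<in> carrier M"
    have "f (x \<otimes>\<^bsub>M\<^esub> y \<otimes>\<^bsub>M\<^esub> z) = f (x \<otimes>\<^bsub>M\<^esub> (y \<otimes>\<^bsub>M\<^esub> z))"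
      using xyz by (simp add: hom closed f_carrier H.m_assoc)
    then show "x \<otimes>\<^bsub>M\<^esub> y \<otimes>\<^bsub>M\<^esub> z = x \<otimes>\<^bsub>M\<^esub> (y \<otimes>\<^bsub>M\<^esub> z)"
      using inj xyz closed by (meson inj_onD)
  next
    fix x assume x: "x \<in> carrier M"
    have "f (\<one>\<^bsub>M\<^esub> \<otimes>\<^bsub>M\<^esub> x) = f x" using x one by (simp add: hom f_one f_carrier)
    then show "\<one>\<^bsub>M\<^esub> \<otimes>\<^bsub>M\<^esub> x = x" using inj x one closed by (meson inj_onD)
  next
    fix x assume x: "x \<in> carrier M"
    have "inv\<^bsub>H\<^esub> (f x) \<in> f ` carrier M" using surj f_carrier[OF x] by simp
    then obtain y where y: "y \<in> carrier M" "f y = inv\<^bsub>H\<^esub> (f x)" by auto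
    then have "f (y \<otimes>\<^bsub>M\<^esub> x) = f \<one>\<^bsub>M\<^esub>" using x by (simp add: hom f_one f_carrier)
    then have "y \<otimes>\<^bsub>M\<^esub> x = \<one>\<^bsub>M\<^esub>" using inj x y one closed by (meson inj_onD)
    then show "\<exists>y\<in>carrier M. y \<otimes>\<^bsub>M\<^esub> x = \<one>\<^bsub>M\<^esub>" using y by blast
  qed (use closed one in auto)
qed

lemma SymQ_simps:
  "carrier (SymQ G) = Sym0 G // stab_rel G"
  "X \<otimes>\<^bsub>SymQ G\<^esub> Y = stab_rel G `` {stack (SOME s. s \<in> X) (SOME t. t \<in> Y)}"
  "\<one>\<^bsub>SymQ G\<^esub> = stab_rel G `` {(1, \<lambda>g A. A)}"
  by (simp_all add: SymQ_def)

lemma stab_rel_iff: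
  assumes "group G" "finite (carrier G)"
  shows "(s, t) \<in> stab_rel G \<longleftrightarrow> is_lps G s \<and> is_lps G t \<and> lps_class G s = lps_class G t"
  by (simp add: stab_rel_def stably_equiv_iff_lps_class_eq[OF assms])

lemma stab_rel_Image_eq_iff:
  assumes G: "group G" "finite (carrier G)" and "is_lps G s" "is_lps G t"
  shows "stab_rel G `` {s} = stab_rel G `` {t} \<longleftrightarrow> lps_class G s = lps_class G t"
proof
  assume "stab_rel G `` {s} = stab_rel G `` {t}"
  moreover have "t \<in> stab_rel G `` {t}" using assms by (simp add: stab_rel_iff[OF G])
  ultimately have "(s, t) \<in> stab_rel G" by blast
  then show "lps_class G s = lps_class G t" by (simp add: stab_rel_iff[OF G])
next
  assume "lps_class G s = lps_class G t"
  then show "stab_rel G `` {s} = stab_rel G `` {t}"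
    using assms by (simp add: set_eq_iff[of "stab_rel G `` {s}"] stab_rel_iff[OF G])
qed

lemma SymQ_carrier_iff: "X \<in> carrier (SymQ G) \<longleftrightarrow> (\<exists>s. is_lps G s \<and> X = stab_rel G `` {s})"
  by (auto simp: SymQ_simps quotient_def Sym0_def)

definition sym_class :: "('g, 'b) monoid_scheme \<Rightarrow> 'g lps set \<Rightarrow> ('g \<times> 'g \<Rightarrow> complex) set" where
  "sym_class G X = lps_class G (SOME s. s \<in> X)"

lemma some_in_stab_rel_Image:
  assumes G: "group G" "finite (carrier G)" and s: "is_lps G s"
  shows "(SOME t. t \<in> stab_rel G `` {s}) \<in> stab_rel G `` {s}"
  by (rule someI[of _ s]) (simp add: stab_rel_iff[OF G] s)

lemma sym_class_Image:
  assumes G: "group G" "finite (carrier G)" and s: "is_lps G s"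
  shows "sym_class G (stab_rel G `` {s}) = lps_class G s"
proof -
  let ?t = "SOME t. t \<in> stab_rel G `` {s}"
  have "(s, ?t) \<in> stab_rel G" using some_in_stab_rel_Image[OF G s] by blast
  then show ?thesis unfolding sym_class_def stab_rel_iff[OF G] by (elim conjE) (rule sym)
qed

lemma lps_class_stack:
  assumes G: "group G" and L: "is_lps G s" "is_lps G t"
  shows "is_lps G (stack s t) \<and> lps_class G (stack s t) = lps_class G s <#>\<^bsub>Z2 G\<^esub> lps_class G t"
proof -
  obtain n \<beta> m \<beta>' where s: "s = (n, \<beta>)" and t: "t = (m, \<beta>')" by (cases s, cases t)
  with L have L': "is_lps G (n, \<beta>)" "is_lps G (m, \<beta>')" by simp_all
  obtain U \<omega> where I: "proj_impl G n \<beta> U \<omega>" using lps_proj_impl_exists[OF G L'(1)] by blast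
  obtain U' \<omega>' where I': "proj_impl G m \<beta>' U' \<omega>'" using lps_proj_impl_exists[OF G L'(2)] by blast
  note pos = is_lps_dim_pos[OF L'(1)] is_lps_dim_pos[OF L'(2)]
  note I_stack = proj_impl_stack[OF I I']
  have "is_lps G (stack s t)" using is_lps_if_proj_impl[OF G _ I_stack] pos s t by (simp add: stack_simp)
  moreover have "lps_class G (stack s t) = coboundaries2 G #>\<^bsub>Z2 G\<^esub> (\<lambda>x. \<omega> x * \<omega>' x)"
    using lps_class_eq[OF G _ I_stack] pos s t by (simp add: stack_simp)
  moreover have "\<dots> = lps_class G s <#>\<^bsub>Z2 G\<^esub> lps_class G t"
    using normal.rcos_sum[OF coboundaries2_normal[OF G], of \<omega> \<omega>'] proj_implD(5)[OF I] proj_implD(5)[OF I']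
      lps_class_eq[OF G pos(1) I] lps_class_eq[OF G pos(2) I'] s t
    by simp
  ultimately show ?thesis by simp
qed

lemma lps_class_trivial:
  assumes G: "group G"
  shows "is_lps G (1, \<lambda>g A. A) \<and> lps_class G (1, \<lambda>g A. A) = coboundaries2 G"
proof -
  have I: "proj_impl G 1 (\<lambda>g A. A) (\<lambda>g. 1\<^sub>m 1) (\<lambda>_. 1)"
    unfolding proj_impl_def by (auto simp: unitary_mat_one Ad_one cocycles2_one)
  have "coboundaries2 G #>\<^bsub>Z2 G\<^esub> (\<lambda>_. 1) = coboundaries2 G"
    using group.coset_join2[OF comm_group.axioms(2)[OF Z2_comm_group]
        cocycles2_one[of G, folded Z2_simps(1)] coboundaries2_subgroup[OF G] one_in_coboundaries2] .
  then show ?thesis using is_lps_if_proj_impl[OF G _ I] lps_class_eq[OF G _ I] by simp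
qed

lemma lps_class_surj:
  assumes G: "group G" and fin: "finite (carrier G)" and \<omega>: "\<omega> \<in> cocycles2 G"
  shows "\<exists>s. is_lps G s \<and> lps_class G s = coboundaries2 G #>\<^bsub>Z2 G\<^esub> \<omega>"
proof -
  obtain e where "bij_betw e {..<card (carrier G)} (carrier G)"
    using ex_bij_betw_nat_finite[OF fin] by (auto simp: atLeast0LessThan)
  with G interpret enumerated_group G "card (carrier G)" e
    by (simp add: enumerated_group_def enumerated_group_axioms_def)
  have "proj_impl G (card (carrier G)) (\<lambda>g. Ad (twisted_regular \<omega> g)) (twisted_regular \<omega>) \<omega>"
    unfolding proj_impl_def using twisted_regular_unitary[OF \<omega>] twisted_regular_mult[OF \<omega>] \<omega> by auto
  then show ?thesis using is_lps_if_proj_impl[OF G size_pos] lps_class_eq[OF G size_pos] by blast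
qed

context
  fixes G :: "('g, 'b) monoid_scheme"
  assumes G: "group G" and fin: "finite (carrier G)"
begin

lemma SymQ_mult_closed_sym_class_mult:
  assumes X: "X \<in> carrier (SymQ G)" and Y: "Y \<in> carrier (SymQ G)"
  shows "X \<otimes>\<^bsub>SymQ G\<^esub> Y \<in> carrier (SymQ G) \<and>
    sym_class G (X \<otimes>\<^bsub>SymQ G\<^esub> Y) = sym_class G X \<otimes>\<^bsub>H2 G\<^esub> sym_class G Y"
proof -
  define x y where "x = (SOME u. u \<in> X)" and "y = (SOME u. u \<in> Y)"
  have "is_lps G x" "is_lps G y"
    using X Y some_in_stab_rel_Image[OF G fin] by (auto simp: SymQ_carrier_iff stab_rel_iff[OF G fin] x_def y_def)
  note xy = lps_class_stack[OF G this]
  have XY: "X \<otimes>\<^bsub>SymQ G\<^esub> Y = stab_rel G `` {stack x y}" by (simp add: SymQ_simps x_def y_def)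
  show ?thesis
  proof
    show "X \<otimes>\<^bsub>SymQ G\<^esub> Y \<in> carrier (SymQ G)" using XY xy SymQ_carrier_iff by blast
    show "sym_class G (X \<otimes>\<^bsub>SymQ G\<^esub> Y) = sym_class G X \<otimes>\<^bsub>H2 G\<^esub> sym_class G Y"
      using XY xy sym_class_Image[OF G fin] by (simp add: H2_simps sym_class_def[of G X] sym_class_def[of G Y]
          x_def[symmetric] y_def[symmetric])
  qed
qed

lemma sym_class_bij: "bij_betw (sym_class G) (carrier (SymQ G)) (carrier (H2 G))"
proof (rule bij_betw_imageI)
  show "inj_on (sym_class G) (carrier (SymQ G))"
  proof (rule inj_onI)
    fix X Y assume "X \<in> carrier (SymQ G)" "Y \<in> carrier (SymQ G)" and eq: "sym_class G X = sym_class G Y"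
    then obtain s t where "is_lps G s" "X = stab_rel G `` {s}" "is_lps G t" "Y = stab_rel G `` {t}"
      unfolding SymQ_carrier_iff by blast
    with eq show "X = Y" by (simp add: sym_class_Image[OF G fin] stab_rel_Image_eq_iff[OF G fin])
  qed
  show "sym_class G ` carrier (SymQ G) = carrier (H2 G)"
  proof
    show "sym_class G ` carrier (SymQ G) \<subseteq> carrier (H2 G)"
      using lps_class_carrier[OF G] by (auto simp: SymQ_carrier_iff sym_class_Image[OF G fin])
    show "carrier (H2 G) \<subseteq> sym_class G ` carrier (SymQ G)"
    proof
      fix C assume "C \<in> carrier (H2 G)"
      then obtain \<omega> where "\<omega> \<in> cocycles2 G" "C = coboundaries2 G #>\<^bsub>Z2 G\<^esub> \<omega>"
        by (auto simp: H2_simps RCOSETS_def)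
      then obtain s where s: "is_lps G s" "lps_class G s = C" using lps_class_surj[OF G fin] by blast
      then have "stab_rel G `` {s} \<in> carrier (SymQ G)" unfolding SymQ_carrier_iff by blast
      then show "C \<in> sym_class G ` carrier (SymQ G)" using s sym_class_Image[OF G fin s(1)] by force
    qed
  qed
qed

lemma SymQ_one_closed: "\<one>\<^bsub>SymQ G\<^esub> \<in> carrier (SymQ G)"
  and sym_class_one: "sym_class G \<one>\<^bsub>SymQ G\<^esub> = \<one>\<^bsub>H2 G\<^esub>"
  using lps_class_trivial[OF G] sym_class_Image[OF G fin, of "(1, \<lambda>g A. A)"]
  by (auto simp: SymQ_carrier_iff SymQ_simps(3) H2_simps)

end

theorem lemmaA2:
  fixes G :: "('g, 'b) monoid_scheme"
  assumes "group G" and "finite (carrier G)"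
  shows "group (SymQ G) \<and> (\<exists>\<Omega>. \<Omega> \<in> iso (SymQ G) (H2 G))"
proof
  note mult = SymQ_mult_closed_sym_class_mult[OF assms]
  show "group (SymQ G)"
    using bij_hom_imp_group[OF H2_group[OF assms(1)] sym_class_bij[OF assms]] mult
      SymQ_one_closed[OF assms] sym_class_one[OF assms]
    by blast
  have "sym_class G \<in> iso (SymQ G) (H2 G)"
    using sym_class_bij[OF assms] mult by (auto simp: iso_def hom_def bij_betw_def)
  then show "\<exists>\<Omega>. \<Omega> \<in> iso (SymQ G) (H2 G)" by blast
qed

end
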